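(* Let $(E,M_E)$ be a Lie $\infty$-algebra with brackets $\{l_k\}_{k\ge1}$. For $x\in S^i(E)$, $i\ge1$, let $\mathrm{ad}^D_x$ be the coderivation of $\bar S(E)$ of degree $|x|+1$ determined by the maps $S^k(E)\to E$, $e\mapsto l_{i+k}(x,e)$, $k\ge1$. Then the degree $+1$ linear map $\mathbf{ad}:\bar S(E)\to\mathrm{Coder}(\bar S(E))$, $x\mapsto\mathrm{ad}^D_x$, is a Lie $\infty$-morphism from $(E,M_E)$ to the symmetric DGLA $(\mathrm{Coder}(\bar S(E))[1],\partial_{M_E},[\cdot,\cdot])$; i.e. for all $x\in\bar S(E)$, $\mathrm{ad}^D_{M_E(x)}=\partial_{M_E}\mathrm{ad}^D_x+\tfrac12[\mathrm{ad}^D_{x_{(1)}},\mathrm{ad}^D_{x_{(2)}}]$ (last term $0$ for $x\in E$). In other words, $\mathbf{ad}$ is an action of $E$ on itself.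
   Context: All graded vector spaces are $\mathbb Z$-graded and finite dimensional over $\mathbb K=\mathbb R$ or $\mathbb C$, with Koszul sign conventions. $\bar S(E)=\bigoplus_{k\ge1}S^k(E)$ is the reduced graded symmetric coalgebra with the unshuffle coproduct $\Delta$; Sweedler notation $\Delta(x)=x_{(1)}\otimes x_{(2)}$. Coderivations of $\bar S(E)$ of degree $k$ are uniquely determined by their composite with the projection $p_E:\bar S(E)\to E$, via $Q(x)=q(x_{(1)})\odot x_{(2)}+q(x)$. A (symmetric) Lie $\infty$-algebra $(E,M_E)$ is a degree $+1$ coderivation $M_E$ of $\bar S(E)$ with $M_E^2=0$; its brackets are $l_k=p_E\circ M_E|_{S^k(E)}$, and $l_k(x,e)$ for $x\in S^i(E),e\in S^{k}(E)$ means $l_{i+k}$ applied to $x\odot e$. $\mathrm{Coder}(\bar S(E))[1]$ is the symmetric DGLA with $\partial_{M_E}Q=-M_E\circ Q+(-1)^{\deg Q}Q\circ M_E$ and $[Q,P]=(-1)^{\deg Q}(Q\circ P-(-1)^{\deg Q\deg P}P\circ Q)$ ($\deg$ = degree as a map). *)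

theory Defs
  imports Complex_Main
begin

text \<open>
E is finite dimensional and Z-graded with homogeneous basis
e_0,...,e_{n-1}, where e_j has degree d j.  A word w = [i_1,...,i_k] (list of basis
indices) stands for e_{i_1} \<odot> ... \<odot> e_{i_k} in S^k(E).  The canonical basis of
the reduced symmetric coalgebra consists of the valid words: nonempty, sorted,
indices below n, no odd-degree index repeated.  Elements of S(E) are coefficient
functions  nat list \<Rightarrow> 'a  (supported on canonical monomials); elements of E are
coefficient functions  nat \<Rightarrow> 'a.  Linear maps of S-bar(E) are given by their values
on words:  nat list \<Rightarrow> (nat list \<Rightarrow> 'a).
\<close>

definition ksgn :: "int \<Rightarrow> 'a::comm_ring_1" where
  "ksgn k = (if even k then 1 else -1)"

text \<open>Koszul sign of swapping e_i and e_j.\<close>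
definition kpair :: "(nat \<Rightarrow> int) \<Rightarrow> nat \<Rightarrow> nat \<Rightarrow> 'a::comm_ring_1" where
  "kpair d i j = ksgn (d i * d j)"

definition wdeg :: "(nat \<Rightarrow> int) \<Rightarrow> nat list \<Rightarrow> int" where
  "wdeg d w = sum_list (map d w)"

definition odd_rep :: "(nat \<Rightarrow> int) \<Rightarrow> nat list \<Rightarrow> bool" where
  "odd_rep d w = (\<exists>a b. a < b \<and> b < length w \<and> w!a = w!b \<and> odd (d (w!a)))"

definition valid :: "nat \<Rightarrow> (nat \<Rightarrow> int) \<Rightarrow> nat list \<Rightarrow> bool" where
  "valid n d w = (w \<noteq> [] \<and> sorted w \<and> set w \<subseteq> {..<n} \<and> \<not> odd_rep d w)"

text \<open>Koszul sign of (stably) sorting a word.\<close>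
definition ksort_sign :: "(nat \<Rightarrow> int) \<Rightarrow> nat list \<Rightarrow> 'a::comm_ring_1" where
  "ksort_sign d w = (\<Prod>(a,b)\<in>{(a,b). a < b \<and> b < length w \<and> w!a > w!b}. kpair d (w!a) (w!b))"

text \<open>The element e_{i_1} \<odot> ... \<odot> e_{i_k} of S(E) in canonical coordinates.\<close>
definition mono :: "(nat \<Rightarrow> int) \<Rightarrow> nat list \<Rightarrow> nat list \<Rightarrow> 'a::comm_ring_1" where
  "mono d w = (\<lambda>m. if odd_rep d w \<or> m \<noteq> sort w then 0 else ksort_sign d w)"

text \<open>Koszul sign of the unshuffle moving the letters at positions I to the front.\<close>
definition unsh_sign :: "(nat \<Rightarrow> int) \<Rightarrow> nat list \<Rightarrow> nat set \<Rightarrow> 'a::comm_ring_1" where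
  "unsh_sign d w I = (\<Prod>(a,b)\<in>{(a,b). a < b \<and> b < length w \<and> a \<notin> I \<and> b \<in> I}. kpair d (w!a) (w!b))"

text \<open>v \<odot> u for v in E and a word u.\<close>
definition vprod :: "nat \<Rightarrow> (nat \<Rightarrow> int) \<Rightarrow> (nat \<Rightarrow> 'a::comm_ring_1) \<Rightarrow> nat list \<Rightarrow> nat list \<Rightarrow> 'a" where
  "vprod n d v u = (\<lambda>m. \<Sum>j<n. v j * mono d (j # u) m)"

text \<open>Coderivation Q determined by q (given on words):
  Q(x) = q(x_(1)) \<odot> x_(2) + q(x), via the unshuffle coproduct.\<close>
definition coder :: "nat \<Rightarrow> (nat \<Rightarrow> int) \<Rightarrow> (nat list \<Rightarrow> nat \<Rightarrow> 'a::comm_ring_1) \<Rightarrow> nat list \<Rightarrow> nat list \<Rightarrow> 'a" where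
  "coder n d q w = (\<lambda>m. \<Sum>I\<in>{I. I \<subseteq> {..<length w} \<and> I \<noteq> {}}.
       unsh_sign d w I * vprod n d (q (nths w I)) (nths w (- I)) m)"

definition lin :: "(nat list \<Rightarrow> nat list \<Rightarrow> 'a::comm_ring_1) \<Rightarrow> (nat list \<Rightarrow> 'a) \<Rightarrow> nat list \<Rightarrow> 'a" where
  "lin F X = (\<lambda>m'. \<Sum>m\<in>{m. X m \<noteq> 0}. X m * F m m')"

definition comp :: "(nat list \<Rightarrow> nat list \<Rightarrow> 'a::comm_ring_1) \<Rightarrow> (nat list \<Rightarrow> nat list \<Rightarrow> 'a) \<Rightarrow> nat list \<Rightarrow> nat list \<Rightarrow> 'a" where
  "comp F G = (\<lambda>w. lin F (G w))"

text \<open>Extension of the brackets (given on canonical monomials) to all words,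
  by graded symmetry.\<close>
definition wext :: "(nat \<Rightarrow> int) \<Rightarrow> (nat list \<Rightarrow> nat \<Rightarrow> 'a::comm_ring_1) \<Rightarrow> nat list \<Rightarrow> nat \<Rightarrow> 'a" where
  "wext d l w = (if odd_rep d w then (\<lambda>j. 0) else (\<lambda>j. ksort_sign d w * l (sort w) j))"

text \<open>M_E: the coderivation determined by the brackets l (l w = l_k(e_w)).\<close>
definition MapM :: "nat \<Rightarrow> (nat \<Rightarrow> int) \<Rightarrow> (nat list \<Rightarrow> nat \<Rightarrow> 'a::comm_ring_1) \<Rightarrow> nat list \<Rightarrow> nat list \<Rightarrow> 'a" where
  "MapM n d l = coder n d (wext d l)"

definition lie_infty :: "nat \<Rightarrow> (nat \<Rightarrow> int) \<Rightarrow> (nat list \<Rightarrow> nat \<Rightarrow> 'a::comm_ring_1) \<Rightarrow> bool" where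
  "lie_infty n d l \<longleftrightarrow>
     (\<forall>w. valid n d w \<longrightarrow> (\<forall>j. l w j \<noteq> 0 \<longrightarrow> j < n \<and> d j = wdeg d w + 1)) \<and>
     (\<forall>w. valid n d w \<longrightarrow> comp (MapM n d l) (MapM n d l) w = (\<lambda>_. 0))"

definition adD :: "nat \<Rightarrow> (nat \<Rightarrow> int) \<Rightarrow> (nat list \<Rightarrow> nat \<Rightarrow> 'a::comm_ring_1) \<Rightarrow> nat list \<Rightarrow> nat list \<Rightarrow> nat list \<Rightarrow> 'a" where
  "adD n d l x = coder n d (\<lambda>e. wext d l (x @ e))"

definition adD_el :: "nat \<Rightarrow> (nat \<Rightarrow> int) \<Rightarrow> (nat list \<Rightarrow> nat \<Rightarrow> 'a::comm_ring_1) \<Rightarrow> (nat list \<Rightarrow> 'a) \<Rightarrow> nat list \<Rightarrow> nat list \<Rightarrow> 'a" where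
  "adD_el n d l X = (\<lambda>y m. \<Sum>u\<in>{u. X u \<noteq> 0}. X u * adD n d l u y m)"

definition dM :: "nat \<Rightarrow> (nat \<Rightarrow> int) \<Rightarrow> (nat list \<Rightarrow> nat \<Rightarrow> 'a::comm_ring_1) \<Rightarrow> (nat list \<Rightarrow> nat list \<Rightarrow> 'a) \<Rightarrow> int \<Rightarrow> nat list \<Rightarrow> nat list \<Rightarrow> 'a" where
  "dM n d l Q p = (\<lambda>y m. - comp (MapM n d l) Q y m + ksgn p * comp Q (MapM n d l) y m)"

definition cbr :: "(nat list \<Rightarrow> nat list \<Rightarrow> 'a::comm_ring_1) \<Rightarrow> int \<Rightarrow> (nat list \<Rightarrow> nat list \<Rightarrow> 'a) \<Rightarrow> int \<Rightarrow> nat list \<Rightarrow> nat list \<Rightarrow> 'a" where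
  "cbr Q p P r = (\<lambda>y m. ksgn p * (comp Q P y m - ksgn (p * r) * comp P Q y m))"

end

theory Submission
  imports Defs "HOL-Library.Multiset"
begin

text \<open>
  A Koszul-signed sum over the unshuffles
  x = x_(1) \<odot> x_(2) of a word is expressed by a recursion on the word (unsh_sum), so that
  coassociativity, graded cocommutativity and compatibility with concatenation become
  inductions.  Composing two coderivations P, R generated by p, r gives the coderivation
  generated by p(R(_)) plus a cross term that cancels in the graded commutator; hence
  [P, R] is the coderivation generated by the graded commutator of these
  Nijenhuis-Richardson products.  Both sides of the theorem are therefore coderivations
  of this kind, and it suffices to compare their generators on a word e.  That comparison
  is the component of M_E^2 = 0 on x \<odot> e: splitting the unshuffles of x \<odot> e along
  x and e, the terms whose inner bracket takes no letter from e give ad^D_{M_E x},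
  those taking all of x or none of x give \<partial>_{M_E} ad^D_x, and the rest give the
  brackets [ad^D_{x_(1)}, ad^D_{x_(2)}], each of them twice.
\<close>

lemma ksgn_add: "(ksgn (a + b) :: 'a::comm_ring_1) = ksgn a * ksgn b"
  by (auto simp: ksgn_def)

lemma ksgn_eqI: "(even a \<longleftrightarrow> even b) \<Longrightarrow> (ksgn a :: 'a::comm_ring_1) = ksgn b"
  by (simp add: ksgn_def)

lemma ksgn_sq: "(ksgn a :: 'a::comm_ring_1) * ksgn a = 1"
  by (auto simp: ksgn_def)

lemma ksgn_0[simp]: "ksgn 0 = 1"
  by (simp add: ksgn_def)

lemma ksgn_even: "even a \<Longrightarrow> ksgn a = 1"
  by (simp add: ksgn_def)

lemma ksgn_odd: "odd a \<Longrightarrow> ksgn a = -1"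
  by (simp add: ksgn_def)

lemma kpair_comm: "kpair d a b = kpair d b a"
  by (simp add: kpair_def mult.commute)

lemma kpair_sq: "(kpair d a b :: 'a::comm_ring_1) * kpair d a b = 1"
  by (simp add: kpair_def ksgn_sq)

lemma wdeg_Nil[simp]: "wdeg d [] = 0"
  and wdeg_Cons[simp]: "wdeg d (a#w) = d a + wdeg d w"
  and wdeg_append[simp]: "wdeg d (u @ v) = wdeg d u + wdeg d v"
  by (auto simp: wdeg_def)

lemma prod_pairs_Suc:
  "(\<Prod>(a,b)\<in>{(a,b). a<b \<and> b<Suc k \<and> R a b}. f a b :: 'a::comm_monoid_mult) =
   (\<Prod>b\<in>{b. b<k \<and> R 0 (Suc b)}. f 0 (Suc b)) *
   (\<Prod>(a,b)\<in>{(a,b). a<b \<and> b<k \<and> R (Suc a) (Suc b)}. f (Suc a) (Suc b))"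
proof -
  have eq: "{(a,b). a<b \<and> b<Suc k \<and> R a b} =
     (\<lambda>b. (0, Suc b)) ` {b. b<k \<and> R 0 (Suc b)} \<union>
     map_prod Suc Suc ` {(a,b). a<b \<and> b<k \<and> R (Suc a) (Suc b)}"
  proof (rule set_eqI, clarify)
    fix a b
    show "((a,b) \<in> {(a,b). a<b \<and> b<Suc k \<and> R a b}) =
      ((a,b) \<in> (\<lambda>b. (0, Suc b)) ` {b. b<k \<and> R 0 (Suc b)} \<union>
     map_prod Suc Suc ` {(a,b). a<b \<and> b<k \<and> R (Suc a) (Suc b)})"
      by (cases a; cases b) (auto simp: image_iff)
  qed
  have fin1: "finite ((\<lambda>b. (0::nat, Suc b)) ` {b. b<k \<and> R 0 (Suc b)})" by auto
  have fin2: "finite (map_prod Suc Suc ` {(a,b). a<b \<and> b<k \<and> R (Suc a) (Suc b)})"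
    by (rule finite_imageI, rule finite_subset[of _ "{..<k} \<times> {..<k}"]) auto
  have disj: "(\<lambda>b. (0::nat, Suc b)) ` {b. b<k \<and> R 0 (Suc b)} \<inter>
      map_prod Suc Suc ` {(a,b). a<b \<and> b<k \<and> R (Suc a) (Suc b)} = {}"
    by force
  show ?thesis
    unfolding eq prod.union_disjoint[OF fin1 fin2 disj]
    by (simp add: prod.reindex inj_on_def case_prod_beta comp_def)
qed

lemma prod_kpair_filter:
  "(\<Prod>b\<in>{b. b < length w \<and> P (w!b)}. kpair d a (w!b) :: 'a::comm_ring_1)
     = ksgn (d a * wdeg d (filter P w))"
proof (induction w)
  case Nil then show ?case by simp
next
  case (Cons c w)
  have eq: "{b. b < length (c#w) \<and> P ((c#w)!b)} =
      (if P c then {0} else {}) \<union> Suc ` {b. b < length w \<and> P (w!b)}"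
  proof (rule set_eqI)
    fix b show "b \<in> {b. b < length (c#w) \<and> P ((c#w)!b)} \<longleftrightarrow>
        b \<in> (if P c then {0} else {}) \<union> Suc ` {b. b < length w \<and> P (w!b)}"
      by (cases b) auto
  qed
  show ?case
    unfolding eq using Cons.IH
    by (subst prod.union_disjoint) (auto simp: prod.reindex kpair_def ksgn_add[symmetric] algebra_simps)
qed

lemma ksort_sign_Nil[simp]: "ksort_sign d [] = 1"
  by (simp add: ksort_sign_def)

lemma ksort_sign_Cons:
  "ksort_sign d (a#w) = ksgn (d a * wdeg d (filter (\<lambda>c. c < a) w)) * ksort_sign d w"
proof -
  have "ksort_sign d (a#w) = (\<Prod>b\<in>{b. b<length w \<and> a > w!b}. kpair d a (w!b)) * ksort_sign d w"
    unfolding ksort_sign_def length_Cons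
    by (subst prod_pairs_Suc[where R = "\<lambda>i j. (a#w)!i > (a#w)!j"]) simp
  also have "(\<Prod>b\<in>{b. b<length w \<and> a > w!b}. kpair d a (w!b)) = ksgn (d a * wdeg d (filter (\<lambda>c. c < a) w))"
    using prod_kpair_filter[where w=w and P="\<lambda>c. c < a" and d=d and a=a] by simp
  finally show ?thesis .
qed

lemma odd_rep_Nil[simp]: "\<not> odd_rep d []"
  by (simp add: odd_rep_def)

lemma odd_rep_Cons: "odd_rep d (a#w) = ((odd (d a) \<and> a \<in> set w) \<or> odd_rep d w)"
proof
  assume "odd_rep d (a#w)"
  then obtain i j where ij: "i<j" "j < Suc (length w)" "(a#w)!i = (a#w)!j" "odd (d ((a#w)!i))"
    by (auto simp: odd_rep_def)
  show "(odd (d a) \<and> a \<in> set w) \<or> odd_rep d w"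
  proof (cases i)
    case 0 then show ?thesis using ij by (cases j) auto
  next
    case (Suc i') then obtain j' where "j = Suc j'" using ij by (cases j) auto
    then show ?thesis using ij Suc unfolding odd_rep_def by auto
  qed
next
  assume "(odd (d a) \<and> a \<in> set w) \<or> odd_rep d w"
  then show "odd_rep d (a#w)"
  proof
    assume "odd (d a) \<and> a \<in> set w"
    then obtain j where "j < length w" "w!j = a" by (auto simp: in_set_conv_nth)
    then show ?thesis unfolding odd_rep_def using \<open>odd (d a) \<and> a \<in> set w\<close>
      by (intro exI[of _ 0] exI[of _ "Suc j"]) auto
  next
    assume "odd_rep d w"
    then obtain i j where "i<j" "j<length w" "w!i = w!j" "odd (d (w!i))" by (auto simp: odd_rep_def)
    then show ?thesis unfolding odd_rep_def by (intro exI[of _ "Suc i"] exI[of _ "Suc j"]) auto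
  qed
qed

section \<open>Unshuffles as Boolean masks\<close>

fun mask_sel :: "bool list \<Rightarrow> 'x list \<Rightarrow> 'x list" where
  "mask_sel (b#bs) (x#xs) = (if b then x # mask_sel bs xs else mask_sel bs xs)"
| "mask_sel _ _ = []"

definition mask_rej :: "bool list \<Rightarrow> 'x list \<Rightarrow> 'x list" where
  "mask_rej bs xs = mask_sel (map Not bs) xs"

lemma mask_rej_simps[simp]:
  "mask_rej (b#bs) (x#xs) = (if b then mask_rej bs xs else x # mask_rej bs xs)"
  "mask_rej [] xs = []" "mask_rej bs [] = []"
  by (auto simp: mask_rej_def)

lemma mask_sel_Nil2[simp]: "mask_sel bs [] = []"
  by (cases bs) auto

fun mask_sign :: "(nat \<Rightarrow> int) \<Rightarrow> bool list \<Rightarrow> nat list \<Rightarrow> 'a::comm_ring_1" where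
  "mask_sign d (b#bs) (x#xs) = (if b then 1 else ksgn (d x * wdeg d (mask_sel bs xs))) * mask_sign d bs xs"
| "mask_sign d _ _ = 1"

definition masks :: "nat \<Rightarrow> bool list set" where
  "masks k = {ms. length ms = k}"

lemma finite_masks[simp]: "finite (masks k)"
proof -
  have "masks k \<subseteq> {xs. set xs \<subseteq> UNIV \<and> length xs = k}" by (auto simp: masks_def)
  then show ?thesis using finite_lists_length_eq[of "UNIV::bool set" k] finite_subset by auto
qed

lemma masks_0: "masks 0 = {[]}"
  by (auto simp: masks_def)

lemma sum_masks_Suc:
  "(\<Sum>ms\<in>masks (Suc k). f ms) = (\<Sum>ms\<in>masks k. f (True#ms)) + (\<Sum>ms\<in>masks k. f (False#ms))"
proof -
  have eq: "masks (Suc k) = (Cons True) ` masks k \<union> (Cons False) ` masks k"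
    by (auto simp: masks_def image_iff length_Suc_conv)
  show ?thesis
    unfolding eq by (subst sum.union_disjoint) (auto simp: sum.reindex)
qed

lemma prod_kpair_mask:
  "length ms = length w \<Longrightarrow>
   (\<Prod>b\<in>{b. b < length w \<and> ms!b}. kpair d a (w!b) :: 'a::comm_ring_1) = ksgn (d a * wdeg d (mask_sel ms w))"
proof (induction w arbitrary: ms)
  case Nil then show ?case by simp
next
  case (Cons c w)
  then obtain b ms' where ms: "ms = b # ms'" "length ms' = length w" by (cases ms) auto
  have eq: "{i. i < length (c#w) \<and> ms!i} = (if b then {0} else {}) \<union> Suc ` {i. i < length w \<and> ms'!i}"
  proof (rule set_eqI)
    fix i show "i \<in> {i. i < length (c#w) \<and> ms!i} \<longleftrightarrow>
        i \<in> (if b then {0} else {}) \<union> Suc ` {i. i < length w \<and> ms'!i}"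
      using ms by (cases i) auto
  qed
  show ?case
    unfolding eq using ms Cons.IH[OF ms(2)]
    by (subst prod.union_disjoint) (auto simp: prod.reindex kpair_def ksgn_add[symmetric] algebra_simps)
qed

definition mask_set :: "bool list \<Rightarrow> nat set" where
  "mask_set ms = {i. i < length ms \<and> ms!i}"

definition set_mask :: "nat \<Rightarrow> nat set \<Rightarrow> bool list" where
  "set_mask k I = map (\<lambda>i. i \<in> I) [0..<k]"

lemma mask_set_Cons: "mask_set (b#ms) = (if b then {0} else {}) \<union> Suc ` mask_set ms"
proof (rule set_eqI)
  fix i show "i \<in> mask_set (b#ms) \<longleftrightarrow> i \<in> (if b then {0} else {}) \<union> Suc ` mask_set ms"
    by (cases i) (auto simp: mask_set_def)
qed

lemma nths_mask_set:
  "length ms = length w \<Longrightarrow> nths w (mask_set ms) = mask_sel ms w \<and> nths w (- mask_set ms) = mask_rej ms w"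
proof (induction w arbitrary: ms)
  case Nil then show ?case by simp
next
  case (Cons c w)
  then obtain b ms' where ms: "ms = b # ms'" "length ms' = length w" by (cases ms) auto
  have e1: "{j. Suc j \<in> mask_set (b#ms')} = mask_set ms'" by (auto simp: mask_set_Cons)
  have e2: "{j. Suc j \<in> - mask_set (b#ms')} = - mask_set ms'" by (auto simp: mask_set_Cons)
  show ?case using Cons.IH[OF ms(2)] ms
    by (simp add: nths_Cons e1 e2 mask_set_Cons inj_image_mem_iff Collect_neg_eq)
qed

lemma unsh_sign_mask_set:
  "length ms = length w \<Longrightarrow> (unsh_sign d w (mask_set ms) :: 'a::comm_ring_1) = mask_sign d ms w"
proof (induction w arbitrary: ms)
  case Nil then show ?case by (simp add: unsh_sign_def)
next
  case (Cons c w)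
  then obtain b ms' where ms: "ms = b # ms'" "length ms' = length w" by (cases ms) auto
  have "(unsh_sign d (c#w) (mask_set ms) :: 'a) =
     (\<Prod>j\<in>{j. j<length w \<and> 0 \<notin> mask_set ms \<and> Suc j \<in> mask_set ms}. kpair d c (w!j)) * unsh_sign d w (mask_set ms')"
    unfolding unsh_sign_def length_Cons
    by (subst prod_pairs_Suc[where R="\<lambda>i j. i \<notin> mask_set ms \<and> j \<in> mask_set ms"]) (simp add: ms mask_set_Cons image_iff)
  also have "(\<Prod>j\<in>{j. j<length w \<and> 0 \<notin> mask_set ms \<and> Suc j \<in> mask_set ms}. kpair d c (w!j)) =
      (if b then 1 else ksgn (d c * wdeg d (mask_sel ms' w)))"
  proof (cases b)
    case True then show ?thesis by (simp add: ms mask_set_Cons)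
  next
    case False
    have "{j. j<length w \<and> 0 \<notin> mask_set ms \<and> Suc j \<in> mask_set ms} = {j. j < length w \<and> ms'!j}"
      using False ms by (auto simp: mask_set_Cons mask_set_def)
    then show ?thesis using False prod_kpair_mask[OF ms(2), of d c] by simp
  qed
  finally show ?case
    unfolding Cons.IH[OF ms(2)] using ms by simp
qed

lemma mask_set_set_mask: "I \<subseteq> {..<k} \<Longrightarrow> mask_set (set_mask k I) = I"
  unfolding mask_set_def set_mask_def by auto

lemma set_mask_mask_set: "set_mask (length ms) (mask_set ms) = ms"
  unfolding mask_set_def set_mask_def by (rule nth_equalityI) auto

lemma sum_subsets_as_masks:
  "(\<Sum>I\<in>{I. I \<subseteq> {..<k}}. F I) = (\<Sum>ms\<in>masks k. F (mask_set ms))"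
  by (rule sum.reindex_bij_witness[where i=mask_set and j="set_mask k"])
    (auto simp: masks_def mask_set_set_mask set_mask_mask_set, auto simp: mask_set_def set_mask_def)

lemma nths_eq_Nil_iff: "(nths xs I = []) = (\<forall>i<length xs. i \<notin> I)"
  by (auto simp: length_0_conv[symmetric] length_nths simp del: length_0_conv)

section \<open>Unshuffle sums\<close>

text \<open>
  unsh_sum d F w is \<Sum> \<epsilon> F(w_(1), w_(2)) over all unshuffles of w, including the two
  with an empty factor; unsh_sum3 is the same for the iterated coproduct.
\<close>

fun unsh_sum :: "(nat \<Rightarrow> int) \<Rightarrow> (nat list \<Rightarrow> nat list \<Rightarrow> 'a::comm_ring_1) \<Rightarrow> nat list \<Rightarrow> 'a" where
  "unsh_sum d F [] = F [] []"
| "unsh_sum d F (c#w) = unsh_sum d (\<lambda>s r. F (c#s) r + ksgn (d c * wdeg d s) * F s (c#r)) w"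

fun unsh_sum3 :: "(nat \<Rightarrow> int) \<Rightarrow> (nat list \<Rightarrow> nat list \<Rightarrow> nat list \<Rightarrow> 'a::comm_ring_1) \<Rightarrow> nat list \<Rightarrow> 'a" where
  "unsh_sum3 d F [] = F [] [] []"
| "unsh_sum3 d F (c#w) = unsh_sum3 d (\<lambda>a b e. F (c#a) b e + ksgn (d c * wdeg d a) * F a (c#b) e
        + ksgn (d c * (wdeg d a + wdeg d b)) * F a b (c#e)) w"

lemma unsh_sum_masks:
  "unsh_sum d F w = (\<Sum>ms\<in>masks (length w). mask_sign d ms w * F (mask_sel ms w) (mask_rej ms w))"
proof (induction w arbitrary: F)
  case Nil then show ?case by (simp add: masks_0)
next
  case (Cons c w)
  show ?case
    by (simp add: Cons sum_masks_Suc sum.distrib algebra_simps)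
qed

lemma unsh_sum_subsets:
  "unsh_sum d F w = (\<Sum>I\<in>{I. I \<subseteq> {..<length w}}. unsh_sign d w I * F (nths w I) (nths w (- I)))"
  unfolding unsh_sum_masks sum_subsets_as_masks
  by (rule sum.cong) (auto simp: masks_def nths_mask_set unsh_sign_mask_set)

lemma sum_subsets_unsh_sum:
  assumes "\<And>I. I \<subseteq> {..<length w} \<Longrightarrow> P I \<longleftrightarrow> Q (nths w I) (nths w (- I))"
  shows "(\<Sum>I\<in>{I. I \<subseteq> {..<length w} \<and> P I}. unsh_sign d w I * F (nths w I) (nths w (- I))) =
    unsh_sum d (\<lambda>s r. if Q s r then F s r else 0) w"
proof -
  have fin: "finite {I. I \<subseteq> {..<length w}}" by simp
  have "(\<Sum>I\<in>{I. I \<subseteq> {..<length w} \<and> P I}. unsh_sign d w I * F (nths w I) (nths w (- I))) =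
      (\<Sum>I\<in>{I. I \<subseteq> {..<length w}}. if P I then unsh_sign d w I * F (nths w I) (nths w (- I)) else 0)"
    using sum.inter_filter[OF fin, where P=P] by simp
  also have "\<dots> = unsh_sum d (\<lambda>s r. if Q s r then F s r else 0) w"
    unfolding unsh_sum_subsets by (rule sum.cong) (auto simp: assms)
  finally show ?thesis .
qed

lemma sum_proper_subsets_unsh_sum:
  "(\<Sum>I\<in>{I. I \<subseteq> {..<length x} \<and> I \<noteq> {} \<and> I \<noteq> {..<length x}}.
      unsh_sign d x I * G (nths x I) (nths x (- I))) =
   unsh_sum d (\<lambda>s r. if s \<noteq> [] \<and> r \<noteq> [] then G s r else 0) x"
  by (rule sum_subsets_unsh_sum) (auto simp: nths_eq_Nil_iff)

lemma unsh_sum_cong: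
  "(\<And>s r. set s \<subseteq> set w \<Longrightarrow> set r \<subseteq> set w \<Longrightarrow> F s r = G s r) \<Longrightarrow>
   unsh_sum d F w = unsh_sum d G w"
proof (induction w arbitrary: F G)
  case Nil then show ?case by simp
next
  case (Cons c w)
  show ?case unfolding unsh_sum.simps
  proof (rule Cons.IH)
    fix s r assume "set s \<subseteq> set w" "set r \<subseteq> set w"
    then show "F (c#s) r + ksgn (d c * wdeg d s) * F s (c#r) = G (c#s) r + ksgn (d c * wdeg d s) * G s (c#r)"
      using Cons.prems[of "c#s" r] Cons.prems[of s "c#r"] by (simp add: subset_insertI2)
  qed
qed

lemma unsh_sum3_cong:
  "(\<And>a b e. set a \<subseteq> set w \<Longrightarrow> set b \<subseteq> set w \<Longrightarrow> set e \<subseteq> set w \<Longrightarrow> F a b e = G a b e) \<Longrightarrow>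
   unsh_sum3 d F w = unsh_sum3 d G w"
proof (induction w arbitrary: F G)
  case Nil then show ?case by simp
next
  case (Cons c w)
  show ?case unfolding unsh_sum3.simps
  proof (rule Cons.IH)
    fix a b e assume "set a \<subseteq> set w" "set b \<subseteq> set w" "set e \<subseteq> set w"
    then show "F (c#a) b e + ksgn (d c * wdeg d a) * F a (c#b) e + ksgn (d c * (wdeg d a + wdeg d b)) * F a b (c#e) =
      G (c#a) b e + ksgn (d c * wdeg d a) * G a (c#b) e + ksgn (d c * (wdeg d a + wdeg d b)) * G a b (c#e)"
      using Cons.prems[of "c#a" b e] Cons.prems[of a "c#b" e] Cons.prems[of a b "c#e"] by (simp add: subset_insertI2)
  qed
qed

lemma unsh_sum_add: "unsh_sum d (\<lambda>s r. F s r + G s r) w = unsh_sum d F w + unsh_sum d G w"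
  by (induction w arbitrary: F G) (simp_all add: algebra_simps)

lemma unsh_sum_scale: "unsh_sum d (\<lambda>s r. c * F s r) w = c * unsh_sum d F w"
proof (induction w arbitrary: F)
  case Nil then show ?case by simp
next
  case (Cons a w)
  have "unsh_sum d (\<lambda>s r. c * F s r) (a#w) = unsh_sum d (\<lambda>s r. c * (F (a#s) r + ksgn (d a * wdeg d s) * F s (a#r))) w"
    by (simp add: distrib_left mult.left_commute)
  then show ?case using Cons.IH by simp
qed

lemma unsh_sum_zero: "unsh_sum d (\<lambda>s r. 0) w = 0"
  by (induction w) simp_all

lemma unsh_sum_neg: "unsh_sum d (\<lambda>s r. - F s r) w = - unsh_sum d F w"
  using unsh_sum_scale[of d "-1" F w] by simp

lemma unsh_sum_diff: "unsh_sum d (\<lambda>s r. F s r - G s r) w = unsh_sum d F w - unsh_sum d G w"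
  using unsh_sum_add[of d F "\<lambda>s r. (-1) * G s r" w] unsh_sum_scale[of d "-1" G w] by simp

lemma unsh_sum_sum: "finite A \<Longrightarrow> unsh_sum d (\<lambda>s r. \<Sum>i\<in>A. F i s r) w = (\<Sum>i\<in>A. unsh_sum d (F i) w)"
  by (induction A rule: finite_induct) (simp_all add: unsh_sum_zero unsh_sum_add)

lemma unsh_sum3_add: "unsh_sum3 d (\<lambda>a b e. F a b e + G a b e) w = unsh_sum3 d F w + unsh_sum3 d G w"
  by (induction w arbitrary: F G) (simp_all add: algebra_simps)

lemma unsh_sum3_scale: "unsh_sum3 d (\<lambda>a b e. c * F a b e) w = c * unsh_sum3 d F w"
proof (induction w arbitrary: F)
  case Nil then show ?case by simp
next
  case (Cons x w)
  have "unsh_sum3 d (\<lambda>a b e. c * F a b e) (x#w) = unsh_sum3 d (\<lambda>a b e. c * (F (x#a) b e + ksgn (d x * wdeg d a) * F a (x#b) e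
        + ksgn (d x * (wdeg d a + wdeg d b)) * F a b (x#e))) w"
    by (simp add: distrib_left mult.left_commute)
  then show ?case using Cons.IH by simp
qed

lemma unsh_sum_wdeg: "unsh_sum d (\<lambda>a b. g (wdeg d a + wdeg d b) * F a b) s = g (wdeg d s) * unsh_sum d F s"
proof (induction s arbitrary: F g)
  case Nil then show ?case by simp
next
  case (Cons c s)
  have "unsh_sum d (\<lambda>a b. g (wdeg d a + wdeg d b) * F a b) (c#s) =
     unsh_sum d (\<lambda>a b. (\<lambda>t. g (d c + t)) (wdeg d a + wdeg d b) * (F (c#a) b + ksgn (d c * wdeg d a) * F a (c#b))) s"
    by (simp add: algebra_simps)
  also have "\<dots> = g (d c + wdeg d s) * unsh_sum d (\<lambda>a b. F (c#a) b + ksgn (d c * wdeg d a) * F a (c#b)) s"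
    by (rule Cons.IH)
  finally show ?case by (simp only: unsh_sum.simps wdeg_Cons)
qed

lemma unsh_sum_split_right: "unsh_sum d (\<lambda>s r. unsh_sum d (\<lambda>s2 r2. F s s2 r2) r) w = unsh_sum3 d F w"
proof (induction w arbitrary: F)
  case Nil then show ?case by simp
next
  case (Cons c w)
  have "unsh_sum d (\<lambda>s r. unsh_sum d (\<lambda>s2 r2. F s s2 r2) r) (c#w) =
    unsh_sum d (\<lambda>s r. unsh_sum d (\<lambda>s2 r2. F (c#s) s2 r2 + ksgn (d c * wdeg d s) * (F s (c#s2) r2
        + ksgn (d c * wdeg d s2) * F s s2 (c#r2))) r) w"
    by (simp only: unsh_sum.simps unsh_sum_add unsh_sum_scale)
  also have "\<dots> = unsh_sum d (\<lambda>s r. unsh_sum d (\<lambda>s2 r2. F (c#s) s2 r2 + ksgn (d c * wdeg d s) * F s (c#s2) r2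
        + ksgn (d c * (wdeg d s + wdeg d s2)) * F s s2 (c#r2)) r) w"
  proof (intro arg_cong[where f="\<lambda>F. unsh_sum d F w"] ext arg_cong[where f="\<lambda>F. unsh_sum d F r" for r])
    fix s s2 r2
    have k: "(ksgn (d c * wdeg d s) :: 'a) * ksgn (d c * wdeg d s2) = ksgn (d c * (wdeg d s + wdeg d s2))"
      by (simp add: ksgn_add[symmetric] distrib_left)
    show "F (c#s) s2 r2 + ksgn (d c * wdeg d s) * (F s (c#s2) r2 + ksgn (d c * wdeg d s2) * F s s2 (c#r2)) =
       F (c#s) s2 r2 + ksgn (d c * wdeg d s) * F s (c#s2) r2 + ksgn (d c * (wdeg d s + wdeg d s2)) * F s s2 (c#r2)"
      by (simp only: distrib_left mult.assoc[symmetric] k add.assoc)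
  qed
  also have "\<dots> = unsh_sum3 d (\<lambda>a b e. F (c#a) b e + ksgn (d c * wdeg d a) * F a (c#b) e
        + ksgn (d c * (wdeg d a + wdeg d b)) * F a b (c#e)) w"
    by (rule Cons.IH)
  finally show ?case by (simp only: unsh_sum3.simps)
qed

lemma unsh_sum_split_left: "unsh_sum d (\<lambda>s r. unsh_sum d (\<lambda>s1 s2. F s1 s2 r) s) w = unsh_sum3 d F w"
proof (induction w arbitrary: F)
  case Nil then show ?case by simp
next
  case (Cons c w)
  have e: "\<And>s r. ksgn (d c * wdeg d s) * unsh_sum d (\<lambda>s1 s2. F s1 s2 (c#r)) s =
      unsh_sum d (\<lambda>s1 s2. ksgn (d c * (wdeg d s1 + wdeg d s2)) * F s1 s2 (c#r)) s"
    by (rule unsh_sum_wdeg[where g="\<lambda>t. ksgn (d c * t)" and F="\<lambda>s1 s2. F s1 s2 (c#r)" for r, symmetric])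
  have "unsh_sum d (\<lambda>s r. unsh_sum d (\<lambda>s1 s2. F s1 s2 r) s) (c#w) =
    unsh_sum d (\<lambda>s r. unsh_sum d (\<lambda>s1 s2. F s1 s2 r) (c#s) + ksgn (d c * wdeg d s) * unsh_sum d (\<lambda>s1 s2. F s1 s2 (c#r)) s) w"
    by (simp only: unsh_sum.simps)
  also have "\<dots> = unsh_sum d (\<lambda>s r. unsh_sum d (\<lambda>s1 s2. F (c#s1) s2 r + ksgn (d c * wdeg d s1) * F s1 (c#s2) r
        + ksgn (d c * (wdeg d s1 + wdeg d s2)) * F s1 s2 (c#r)) s) w"
    by (simp only: e unsh_sum.simps unsh_sum_add)
  also have "\<dots> = unsh_sum3 d (\<lambda>a b e. F (c#a) b e + ksgn (d c * wdeg d a) * F a (c#b) e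
        + ksgn (d c * (wdeg d a + wdeg d b)) * F a b (c#e)) w"
    by (rule Cons.IH)
  finally show ?case by (simp only: unsh_sum3.simps)
qed

lemma unsh_sum_comm: "unsh_sum d F w = unsh_sum d (\<lambda>s r. ksgn (wdeg d s * wdeg d r) * F r s) w"
proof (induction w arbitrary: F)
  case Nil then show ?case by simp
next
  case (Cons c w)
  have "unsh_sum d F (c#w) = unsh_sum d (\<lambda>s r. ksgn (wdeg d s * wdeg d r) *
      (F (c#r) s + ksgn (d c * wdeg d r) * F r (c#s))) w"
    by (simp add: Cons.IH[of "\<lambda>s r. F (c#s) r + ksgn (d c * wdeg d s) * F s (c#r)"])
  also have "\<dots> = unsh_sum d (\<lambda>s r. ksgn ((d c + wdeg d s) * wdeg d r) * F r (c#s) +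
      ksgn (d c * wdeg d s) * (ksgn (wdeg d s * (d c + wdeg d r)) * F (c#r) s)) w"
  proof (rule arg_cong[where f="\<lambda>F. unsh_sum d F w"], intro ext)
    fix s r
    have 1: "(ksgn (wdeg d s * wdeg d r) :: 'a) * ksgn (d c * wdeg d r) = ksgn ((d c + wdeg d s) * wdeg d r)"
      by (simp add: ksgn_add[symmetric] algebra_simps)
    have 2: "(ksgn (wdeg d s * wdeg d r) :: 'a) = ksgn (d c * wdeg d s) * ksgn (wdeg d s * (d c + wdeg d r))"
      by (simp add: ksgn_add[symmetric] algebra_simps) (rule ksgn_eqI, simp)
    have "ksgn (wdeg d s * wdeg d r) * (F (c # r) s + ksgn (d c * wdeg d r) * F r (c # s)) =
       ksgn (wdeg d s * wdeg d r) * F (c # r) s + ksgn ((d c + wdeg d s) * wdeg d r) * F r (c # s)"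
      by (simp only: distrib_left mult.assoc[symmetric] 1)
    also have "\<dots> = ksgn (d c * wdeg d s) * (ksgn (wdeg d s * (d c + wdeg d r)) * F (c # r) s) +
        ksgn ((d c + wdeg d s) * wdeg d r) * F r (c # s)"
      by (simp only: 2 mult.assoc)
    finally show "ksgn (wdeg d s * wdeg d r) * (F (c # r) s + ksgn (d c * wdeg d r) * F r (c # s)) =
         ksgn ((d c + wdeg d s) * wdeg d r) * F r (c # s) +
         ksgn (d c * wdeg d s) * (ksgn (wdeg d s * (d c + wdeg d r)) * F (c # r) s)"
      by (simp only: add.commute)
  qed
  finally show ?case by (simp only: unsh_sum.simps wdeg_Cons)
qed

lemma unsh_sum3_swap12: "unsh_sum3 d F w = unsh_sum3 d (\<lambda>a b e. ksgn (wdeg d a * wdeg d b) * F b a e) w"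
proof -
  have "unsh_sum3 d F w = unsh_sum d (\<lambda>s r. unsh_sum d (\<lambda>s1 s2. F s1 s2 r) s) w" by (rule unsh_sum_split_left[symmetric])
  also have "\<dots> = unsh_sum d (\<lambda>s r. unsh_sum d (\<lambda>s1 s2. ksgn (wdeg d s1 * wdeg d s2) * F s2 s1 r) s) w"
    by (subst unsh_sum_comm) simp
  also have "\<dots> = unsh_sum3 d (\<lambda>a b e. ksgn (wdeg d a * wdeg d b) * F b a e) w" by (rule unsh_sum_split_left)
  finally show ?thesis .
qed

lemma unsh_sum_if_left_Nil: "unsh_sum d (\<lambda>s r. if s = [] then G r else 0) w = G w"
proof (induction w arbitrary: G)
  case Nil then show ?case by simp
next
  case (Cons c w)
  have "unsh_sum d (\<lambda>s r. if s = [] then G r else 0) (c#w) = unsh_sum d (\<lambda>s r. if s = [] then G (c#r) else 0) w"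
    by simp (rule unsh_sum_cong, simp)
  then show ?case using Cons.IH by simp
qed

lemma unsh_sum_if_right_Nil: "unsh_sum d (\<lambda>s r. if r = [] then G s else 0) w = G w"
proof (induction w arbitrary: G)
  case Nil then show ?case by simp
next
  case (Cons c w)
  have "unsh_sum d (\<lambda>s r. if r = [] then G s else 0) (c#w) = unsh_sum d (\<lambda>s r. if r = [] then G (c#s) else 0) w"
    by simp
  then show ?case using Cons.IH by simp
qed

lemma unsh_sum_split_Nil:
  "w \<noteq> [] \<Longrightarrow>
   unsh_sum d F w = F [] w + F w [] + unsh_sum d (\<lambda>s r. if s \<noteq> [] \<and> r \<noteq> [] then F s r else 0) w"
proof -
  assume w: "w \<noteq> []"
  have "F = (\<lambda>s r. (if s = [] then F [] r else 0) + (if r = [] then F s [] else 0)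
     + (if s \<noteq> [] \<and> r \<noteq> [] then F s r else 0) - (if s = [] then (if r = [] then F [] [] else 0) else 0))"
    by (auto intro!: ext)
  then have "unsh_sum d F w = unsh_sum d (\<lambda>s r. (if s = [] then F [] r else 0) + (if r = [] then F s [] else 0)
     + (if s \<noteq> [] \<and> r \<noteq> [] then F s r else 0) - (if s = [] then (if r = [] then F [] [] else 0) else 0)) w"
    by metis
  also have "\<dots> = F [] w + F w [] + unsh_sum d (\<lambda>s r. if s \<noteq> [] \<and> r \<noteq> [] then F s r else 0) w
      - (if w = [] then F [] [] else 0)"
    by (simp only: unsh_sum_diff unsh_sum_add unsh_sum_if_left_Nil unsh_sum_if_right_Nil)
  finally show ?thesis using w by simp
qed

lemma unsh_sum_split_left_Nil: "unsh_sum d F w = F [] w + unsh_sum d (\<lambda>s r. if s = [] then 0 else F s r) w"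
proof -
  have "unsh_sum d F w = unsh_sum d (\<lambda>s r. (if s = [] then F [] r else 0) + (if s = [] then 0 else F s r)) w"
    by (rule unsh_sum_cong) simp
  also have "\<dots> = F [] w + unsh_sum d (\<lambda>s r. if s = [] then 0 else F s r) w"
    by (simp only: unsh_sum_add unsh_sum_if_left_Nil)
  finally show ?thesis .
qed

lemma unsh_sum_append:
  "unsh_sum d F (u @ v) =
   unsh_sum d (\<lambda>s r. unsh_sum d (\<lambda>s' r'. ksgn (wdeg d r * wdeg d s') * F (s @ s') (r @ r')) v) u"
proof (induction u arbitrary: F)
  case Nil then show ?case by simp
next
  case (Cons c u)
  have "unsh_sum d F ((c#u) @ v) = unsh_sum d (\<lambda>s r. unsh_sum d (\<lambda>s' r'. ksgn (wdeg d r * wdeg d s') *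
       (F (c # s @ s') (r @ r') + ksgn (d c * (wdeg d s + wdeg d s')) * F (s @ s') (c # r @ r'))) v) u"
    using Cons.IH[of "\<lambda>s r. F (c#s) r + ksgn (d c * wdeg d s) * F s (c#r)"] by simp
  also have "\<dots> = unsh_sum d (\<lambda>s r. unsh_sum d (\<lambda>s' r'. ksgn (wdeg d r * wdeg d s') * F (c # s @ s') (r @ r')) v
     + ksgn (d c * wdeg d s) * unsh_sum d (\<lambda>s' r'. ksgn ((d c + wdeg d r) * wdeg d s') * F (s @ s') (c # r @ r')) v) u"
  proof (rule arg_cong[where f="\<lambda>F. unsh_sum d F u"], intro ext)
    fix s r
    have e: "\<And>s'. (ksgn (wdeg d r * wdeg d s') :: 'a) * ksgn (d c * wdeg d s + d c * wdeg d s') =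
        ksgn (d c * wdeg d s) * ksgn ((d c + wdeg d r) * wdeg d s')"
      by (simp add: ksgn_add[symmetric] algebra_simps)
    show "unsh_sum d (\<lambda>s' r'. ksgn (wdeg d r * wdeg d s') *
       (F (c # s @ s') (r @ r') + ksgn (d c * (wdeg d s + wdeg d s')) * F (s @ s') (c # r @ r'))) v =
      unsh_sum d (\<lambda>s' r'. ksgn (wdeg d r * wdeg d s') * F (c # s @ s') (r @ r')) v
     + ksgn (d c * wdeg d s) * unsh_sum d (\<lambda>s' r'. ksgn ((d c + wdeg d r) * wdeg d s') * F (s @ s') (c # r @ r')) v"
      by (simp only: distrib_left unsh_sum_add unsh_sum_scale[symmetric] mult.assoc[symmetric] e)
  qed
  finally show ?case by (simp only: unsh_sum.simps wdeg_Cons append_Cons)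
qed

section \<open>Graded symmetry\<close>

text \<open>Functions of words that factor through the graded symmetric algebra.\<close>

definition graded_sym :: "(nat \<Rightarrow> int) \<Rightarrow> (nat list \<Rightarrow> 'a::comm_ring_1) \<Rightarrow> bool" where
  "graded_sym d F \<longleftrightarrow> (\<forall>u a b v. F (u@a#b#v) = kpair d a b * F (u@b#a#v))"

lemma graded_symI: "(\<And>u a b v. F (u@a#b#v) = kpair d a b * F (u@b#a#v)) \<Longrightarrow> graded_sym d F"
  unfolding graded_sym_def by blast

lemma graded_symD: "graded_sym d F \<Longrightarrow> F (u@a#b#v) = kpair d a b * F (u@b#a#v)"
  unfolding graded_sym_def by blast

lemma graded_sym_scale: "graded_sym d F \<Longrightarrow> graded_sym d (\<lambda>w. c * F w)"
proof (rule graded_symI)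
  fix u a b v assume "graded_sym d F"
  then have "F (u@a#b#v) = kpair d a b * F (u@b#a#v)" by (rule graded_symD)
  then show "c * F (u@a#b#v) = kpair d a b * (c * F (u@b#a#v))" by (simp add: mult.left_commute)
qed

lemma graded_sym_add: "graded_sym d F \<Longrightarrow> graded_sym d G \<Longrightarrow> graded_sym d (\<lambda>w. F w + G w)"
proof (rule graded_symI)
  fix u a b v assume "graded_sym d F" "graded_sym d G"
  then have "F (u@a#b#v) = kpair d a b * F (u@b#a#v)" "G (u@a#b#v) = kpair d a b * G (u@b#a#v)"
    by (auto intro: graded_symD)
  then show "F (u@a#b#v) + G (u@a#b#v) = kpair d a b * (F (u@b#a#v) + G (u@b#a#v))" by (simp add: distrib_left)
qed

lemma graded_sym_sum: "finite A \<Longrightarrow> (\<And>i. i \<in> A \<Longrightarrow> graded_sym d (F i)) \<Longrightarrow> graded_sym d (\<lambda>w. \<Sum>i\<in>A. F i w)"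
proof (rule graded_symI)
  fix u a b v assume A: "\<And>i. i \<in> A \<Longrightarrow> graded_sym d (F i)"
  have "(\<Sum>i\<in>A. F i (u@a#b#v)) = (\<Sum>i\<in>A. kpair d a b * F i (u@b#a#v))"
    by (rule sum.cong[OF refl], rule graded_symD[OF A])
  then show "(\<Sum>i\<in>A. F i (u@a#b#v)) = kpair d a b * (\<Sum>i\<in>A. F i (u@b#a#v))" by (simp add: sum_distrib_left)
qed

lemma graded_sym_prefix: "graded_sym d F \<Longrightarrow> graded_sym d (\<lambda>w. F (x @ w))"
proof (rule graded_symI)
  fix u a b v assume "graded_sym d F"
  then have "F ((x@u)@a#b#v) = kpair d a b * F ((x@u)@b#a#v)" by (rule graded_symD)
  then show "F (x@u@a#b#v) = kpair d a b * F (x@u@b#a#v)" by simp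
qed

lemma graded_sym_suffix: "graded_sym d F \<Longrightarrow> graded_sym d (\<lambda>w. F (w @ x))"
proof (rule graded_symI)
  fix u a b v assume "graded_sym d F"
  then have "F (u@a#b#(v@x)) = kpair d a b * F (u@b#a#(v@x))" by (rule graded_symD)
  then show "F ((u@a#b#v)@x) = kpair d a b * F ((u@b#a#v)@x)" by simp
qed

lemma graded_sym_wdeg: "graded_sym d F \<Longrightarrow> graded_sym d (\<lambda>s. g (wdeg d s) * F s)"
proof (rule graded_symI)
  fix u a b v assume "graded_sym d F"
  then have "F (u@a#b#v) = kpair d a b * F (u@b#a#v)" by (rule graded_symD)
  moreover have e: "wdeg d (u@a#b#v) = wdeg d (u@b#a#v)" by simp
  ultimately show "g (wdeg d (u@a#b#v)) * F (u@a#b#v) = kpair d a b * (g (wdeg d (u@b#a#v)) * F (u@b#a#v))"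
    unfolding e by (simp only: mult.left_commute)
qed

lemma graded_sym_if_Nil: "graded_sym d G \<Longrightarrow> graded_sym d (\<lambda>s. if s = [] then 0 else G s)"
proof (rule graded_symI)
  fix u a b v assume "graded_sym d G"
  then have "G (u@a#b#v) = kpair d a b * G (u@b#a#v)" by (rule graded_symD)
  then show "(if u@a#b#v = [] then 0 else G (u@a#b#v)) = kpair d a b * (if u@b#a#v = [] then 0 else G (u@b#a#v))"
    by simp
qed

lemma graded_sym_move:
  assumes "graded_sym d F"
  shows "F (pre @ u @ j # v) = ksgn (d j * wdeg d u) * F (pre @ j # u @ v)"
proof (induction u arbitrary: pre)
  case Nil then show ?case by simp
next
  case (Cons c u)
  have "F (pre @ (c # u) @ j # v) = F ((pre @ [c]) @ u @ j # v)" by simp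
  also have "\<dots> = ksgn (d j * wdeg d u) * F ((pre @ [c]) @ j # u @ v)" by (rule Cons.IH)
  also have "F ((pre @ [c]) @ j # u @ v) = F (pre @ c # j # u @ v)" by simp
  also have "\<dots> = kpair d c j * F (pre @ j # c # u @ v)" by (rule graded_symD[OF assms])
  finally have X: "F (pre @ (c # u) @ j # v) = ksgn (d j * wdeg d u) * (kpair d c j * F (pre @ j # c # u @ v))" .
  have S: "ksgn (d j * wdeg d (c#u)) = ksgn (d j * wdeg d u) * kpair d c j"
    by (simp add: kpair_def ksgn_add[symmetric] algebra_simps)
  show ?case unfolding X S by (simp only: mult.assoc append_Cons)
qed

lemma graded_sym_move_front:
  assumes "graded_sym d F"
  shows "F (u @ j # v) = ksgn (d j * wdeg d u) * F (j # u @ v)"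
  using graded_sym_move[OF assms, of "[]"] by simp

lemma graded_sym_odd_repeat:
  fixes F :: "nat list \<Rightarrow> 'a::field_char_0"
  assumes "graded_sym d F" "odd (d a)" shows "F (u@a#a#v) = 0"
proof -
  have "F (u@a#a#v) = kpair d a a * F (u@a#a#v)" using assms(1) by (rule graded_symD)
  also have "kpair d a a = (-1::'a)" using assms(2) by (simp add: kpair_def ksgn_odd)
  finally show ?thesis by simp
qed

lemma sorted_odd_rep:
  assumes "sorted w" "odd_rep d w" shows "\<exists>u a v. w = u@a#a#v \<and> odd (d a)"
proof -
  obtain i j where ij: "i<j" "j<length w" "w!i = w!j" "odd (d (w!i))" using assms(2) by (auto simp: odd_rep_def)
  have "w!i \<le> w!Suc i" using assms(1) ij by (intro sorted_nth_mono) auto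
  moreover have "w!Suc i \<le> w!j" using assms(1) ij by (intro sorted_nth_mono) auto
  ultimately have eq: "w!Suc i = w!i" using ij by simp
  have "w = take i w @ w!i # drop (Suc i) w" using ij by (intro id_take_nth_drop) simp
  also have "drop (Suc i) w = w!Suc i # drop (Suc (Suc i)) w" using ij by (simp add: Cons_nth_drop_Suc)
  finally show ?thesis using eq ij by metis
qed

text \<open>Swapping an adjacent inversion increases this weight, which is bounded by
  length w * sum_list w: the termination measure of bubble sort.\<close>

fun inversion_weight :: "nat list \<Rightarrow> nat" where
  "inversion_weight [] = 0" | "inversion_weight (a#w) = sum_list w + inversion_weight w"

lemma inversion_weight_append: "inversion_weight (u@v) = inversion_weight u + length u * sum_list v + inversion_weight v"
  by (induction u) auto

lemma inversion_weight_le: "inversion_weight w \<le> length w * sum_list w"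
  by (induction w) (auto simp: algebra_simps)

lemma inversion_measure_swap:
  assumes "b < a"
  shows "length (u@b#a#v) * sum_list (u@b#a#v) - inversion_weight (u@b#a#v)
       < length (u@a#b#v) * sum_list (u@a#b#v) - inversion_weight (u@a#b#v)"
proof -
  let ?w = "u@a#b#v" and ?w' = "u@b#a#v"
  have sw: "sum_list ?w' = sum_list ?w" "length ?w' = length ?w" by simp_all
  have "inversion_weight ?w < inversion_weight ?w'"
    using assms by (simp add: inversion_weight_append algebra_simps)
  moreover have "inversion_weight ?w' \<le> length ?w * sum_list ?w"
    using inversion_weight_le[of ?w'] by (simp only: sw)
  ultimately show ?thesis unfolding sw by (intro diff_less_mono2) auto
qed

lemma unsorted_split: "\<not> sorted w \<Longrightarrow> \<exists>u a b v. w = u@a#b#v \<and> a > b"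
proof (induction w)
  case Nil then show ?case by simp
next
  case (Cons x w)
  show ?case
  proof (cases "sorted w")
    case True
    then obtain y w' where w: "w = y#w'" "x > y" using Cons.prems
      by (cases w) (auto simp: not_le)
    then show ?thesis by (metis append_Nil)
  next
    case False
    then obtain u a b v where "w = u@a#b#v" "a > b" using Cons.IH by blast
    then show ?thesis by (metis append_Cons)
  qed
qed

lemma graded_sym_eq_on_sorted:
  fixes F G :: "nat list \<Rightarrow> 'a::field_char_0"
  assumes "graded_sym d F" "graded_sym d G"
    and P: "\<And>u a b v. P (u@a#b#v) \<Longrightarrow> P (u@b#a#v)"
    and agree: "\<And>w. sorted w \<Longrightarrow> \<not> odd_rep d w \<Longrightarrow> P w \<Longrightarrow> F w = G w"
  shows "P w \<Longrightarrow> F w = G w"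
proof (induction w rule: measure_induct_rule[where f="\<lambda>w. length w * sum_list w - inversion_weight w"])
  case (less w)
  show ?case
  proof (cases "sorted w")
    case True
    show ?thesis
    proof (cases "odd_rep d w")
      case False show ?thesis using agree[OF True False less.prems] .
    next
      case True
      then obtain u a v where uv: "w = u@a#a#v" "odd (d a)" using sorted_odd_rep \<open>sorted w\<close> by blast
      have "F w = 0" unfolding uv(1) by (rule graded_sym_odd_repeat[OF assms(1) uv(2)])
      moreover have "G w = 0" unfolding uv(1) by (rule graded_sym_odd_repeat[OF assms(2) uv(2)])
      ultimately show ?thesis by simp
    qed
  next
    case False
    then obtain u a b v where w: "w = u@a#b#v" "a > b" using unsorted_split by blast
    let ?w' = "u@b#a#v"
    have "F ?w' = G ?w'"
      using less.IH[OF inversion_measure_swap[OF w(2), of u v, folded w(1)]] P[of u a b v] less.prems w(1)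
      by simp
    moreover have "F w = kpair d a b * F ?w'" "G w = kpair d a b * G ?w'"
      unfolding w(1) using assms(1,2) by (auto intro: graded_symD)
    ultimately show ?thesis by simp
  qed
qed

lemma odd_rep_count: "odd_rep d w \<longleftrightarrow> (\<exists>a. odd (d a) \<and> 2 \<le> count (mset w) a)"
proof (induction w)
  case Nil then show ?case by simp
next
  case (Cons c w)
  show ?case
  proof
    assume "odd_rep d (c#w)"
    then show "\<exists>a. odd (d a) \<and> 2 \<le> count (mset (c#w)) a"
      unfolding odd_rep_Cons
    proof
      assume "odd (d c) \<and> c \<in> set w"
      then show ?thesis by (intro exI[of _ c]) (simp add: Suc_le_eq)
    next
      assume "odd_rep d w"
      then obtain a where a: "odd (d a)" "2 \<le> count (mset w) a" using Cons.IH by blast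
      have "count (mset w) a \<le> count (mset (c#w)) a" by simp
      then show ?thesis using a by (intro exI[of _ a] conjI) linarith+
    qed
  next
    assume "\<exists>a. odd (d a) \<and> 2 \<le> count (mset (c#w)) a"
    then obtain a where a: "odd (d a)" "2 \<le> count (mset (c#w)) a" by blast
    show "odd_rep d (c#w)"
    proof (cases "a = c")
      case True
      have "count (mset (c#w)) c = Suc (count (mset w) c)" by simp
      moreover have "2 \<le> count (mset (c#w)) c" using a(2) True by simp
      ultimately have "count (mset w) c \<noteq> 0" by linarith
      then have "c \<in> set w" by (metis count_mset_0_iff)
      then show ?thesis using a True by (simp add: odd_rep_Cons)
    next
      case False
      then have "odd_rep d w" using a Cons.IH by auto
      then show ?thesis by (simp add: odd_rep_Cons)
    qed
  qed
qed

lemma odd_rep_mset: "mset u = mset v \<Longrightarrow> odd_rep d u = odd_rep d v"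
  by (simp add: odd_rep_count)

lemma sort_mset: "mset u = mset v \<Longrightarrow> sort u = sort v"
  by (metis properties_for_sort mset_sort sorted_sort)

lemma wdeg_mset: "mset u = mset v \<Longrightarrow> wdeg d u = wdeg d v"
  unfolding wdeg_def by (metis mset_map sum_mset_sum_list)

lemma odd_rep_sort[simp]: "odd_rep d (sort w) = odd_rep d w"
  by (rule odd_rep_mset) simp

lemma wdeg_sort[simp]: "wdeg d (sort w) = wdeg d w"
  by (rule wdeg_mset) simp

lemma wdeg_filter_swap: "wdeg d (filter P (u@a#b#v)) = wdeg d (filter P (u@b#a#v))"
  by (rule wdeg_mset) simp

lemma ksort_sign_swap_Cons:
  assumes "a < b"
  shows "(ksort_sign d (a#b#v) :: 'a::comm_ring_1) = kpair d a b * ksort_sign d (b#a#v)"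
proof -
  let ?A = "ksgn (d a * wdeg d (filter (\<lambda>c. c < a) v)) :: 'a"
  let ?B = "ksgn (d b * wdeg d (filter (\<lambda>c. c < b) v)) :: 'a"
  let ?K = "ksgn (d a * d b) :: 'a"
  have 1: "ksort_sign d (a#b#v) = ?A * (?B * ksort_sign d v)"
    using assms by (simp add: ksort_sign_Cons)
  have 2: "ksort_sign d (b#a#v) = ksgn (d b * (d a + wdeg d (filter (\<lambda>c. c < b) v))) * (?A * ksort_sign d v)"
    using assms by (simp add: ksort_sign_Cons)
  have 3: "ksgn (d b * (d a + wdeg d (filter (\<lambda>c. c < b) v))) = ?K * ?B"
    by (simp only: distrib_left ksgn_add mult.commute[of "d b" "d a"])
  have 4: "?K * ?K = 1" by (rule ksgn_sq)
  have "kpair d a b * ksort_sign d (b#a#v) = (?K * ?K) * (?A * (?B * ksort_sign d v))"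
    unfolding 2 3 kpair_def by (simp only: mult_ac)
  then show ?thesis unfolding 4 1 by simp
qed

lemma ksort_sign_swap:
  assumes "a \<noteq> b"
  shows "(ksort_sign d (u@a#b#v) :: 'a::comm_ring_1) = kpair d a b * ksort_sign d (u@b#a#v)"
proof (induction u)
  case Nil
  show ?case
  proof (cases "a < b")
    case True
    then show ?thesis using ksort_sign_swap_Cons[OF True, of d v] by (simp only: append_Nil)
  next
    case False
    then have "b < a" using assms by simp
    then have "(ksort_sign d (b#a#v) :: 'a) = kpair d b a * ksort_sign d (a#b#v)" by (rule ksort_sign_swap_Cons)
    then have "kpair d a b * (ksort_sign d (b#a#v) :: 'a) = (kpair d a b * kpair d a b) * ksort_sign d (a#b#v)"
      by (simp add: kpair_comm mult.assoc)
    then show ?thesis by (simp only: kpair_sq mult_1 append_Nil)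
  qed
next
  case (Cons c u)
  have "wdeg d (filter (\<lambda>x. x < c) (u@a#b#v)) = wdeg d (filter (\<lambda>x. x < c) (u@b#a#v))"
    by (rule wdeg_filter_swap)
  then show ?case unfolding append_Cons ksort_sign_Cons Cons by (simp only: mult_ac)
qed

lemma graded_sym_sort_extension:
  fixes h :: "nat list \<Rightarrow> 'a::comm_ring_1"
  shows "graded_sym d (\<lambda>w. if odd_rep d w then 0 else ksort_sign d w * h (sort w))"
  unfolding graded_sym_def
proof (intro allI)
  fix u a b v
  have o: "odd_rep d (u@a#b#v) = odd_rep d (u@b#a#v)" by (rule odd_rep_mset) simp
  have s: "sort (u@a#b#v) = sort (u@b#a#v)" by (rule sort_mset) simp
  show "(if odd_rep d (u@a#b#v) then 0 else ksort_sign d (u@a#b#v) * h (sort (u@a#b#v))) =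
    kpair d a b * (if odd_rep d (u@b#a#v) then 0 else ksort_sign d (u@b#a#v) * h (sort (u@b#a#v)))"
  proof (cases "a = b")
    case True
    show ?thesis
    proof (cases "odd (d a)")
      case True
      have "odd_rep d (u@a#b#v)" using True \<open>a = b\<close> by (auto simp: odd_rep_count intro!: exI[of _ a])
      then show ?thesis using o by simp
    next
      case False
      then have "kpair d a b = (1::'a)" using \<open>a = b\<close> by (simp add: kpair_def ksgn_even)
      then show ?thesis using \<open>a = b\<close> by simp
    qed
  next
    case False
    have k: "ksort_sign d (u@a#b#v) = kpair d a b * ksort_sign d (u@b#a#v)" by (rule ksort_sign_swap[OF False])
    show ?thesis unfolding o s k by (simp add: mult.assoc)
  qed
qed

lemma ksort_sign_sorted: "sorted w \<Longrightarrow> ksort_sign d w = 1"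
proof -
  assume "sorted w"
  have "\<not> (w!a > w!b)" if "a<b" "b<length w" for a b
    using sorted_nth_mono[OF \<open>sorted w\<close>, of a b] that by simp
  then have X: "{(a,b). a < b \<and> b < length w \<and> w!a > w!b} = {}" by auto
  show ?thesis by (simp only: ksort_sign_def X prod.empty)
qed

lemma graded_sym_sort_eq:
  fixes F :: "nat list \<Rightarrow> 'a::field_char_0"
  assumes "graded_sym d F"
  shows "F w = (if odd_rep d w then 0 else ksort_sign d w * F (sort w))"
proof (rule graded_sym_eq_on_sorted[of d F "\<lambda>w. if odd_rep d w then 0 else ksort_sign d w * F (sort w)" "\<lambda>_. True", OF assms graded_sym_sort_extension])
  fix w assume "sorted w" "\<not> odd_rep d w"
  then show "F w = (if odd_rep d w then 0 else ksort_sign d w * F (sort w))"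
    by (simp add: ksort_sign_sorted sorted_sort_id)
qed auto

lemma graded_sym_mono: "graded_sym d (\<lambda>w. mono d w m)"
proof -
  have eq: "(\<lambda>w. mono d w m) = (\<lambda>w. if odd_rep d w then 0 else ksort_sign d w * (if m = sort w then 1 else 0))"
    by (auto simp: mono_def)
  show ?thesis unfolding eq by (rule graded_sym_sort_extension)
qed

lemma graded_sym_mono_Cons: "graded_sym d (\<lambda>r. mono d (j#r) m)"
proof -
  have "graded_sym d (\<lambda>r. mono d ([j]@r) m)" by (rule graded_sym_prefix[OF graded_sym_mono])
  then show ?thesis by simp
qed

lemma graded_sym_wext: "graded_sym d (\<lambda>w. wext d l w j)"
proof -
  have "(\<lambda>w. wext d l w j) = (\<lambda>w. if odd_rep d w then 0 else ksort_sign d w * l (sort w) j)"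
    by (auto simp: wext_def)
  then show ?thesis using graded_sym_sort_extension[of d "\<lambda>s. l s j"] by simp
qed

lemma graded_sym_wext_Cons: "graded_sym d (\<lambda>r. wext d l (j#r) k)"
proof -
  have "graded_sym d (\<lambda>r. wext d l ([j]@r) k)" by (rule graded_sym_prefix[OF graded_sym_wext])
  then show ?thesis by simp
qed

definition graded_sym2 :: "(nat \<Rightarrow> int) \<Rightarrow> (nat list \<Rightarrow> nat list \<Rightarrow> 'a::comm_ring_1) \<Rightarrow> bool" where
  "graded_sym2 d F \<longleftrightarrow> (\<forall>s. graded_sym d (\<lambda>r. F s r)) \<and> (\<forall>r. graded_sym d (\<lambda>s. F s r))"

lemma graded_sym2_step: "graded_sym2 d F \<Longrightarrow> graded_sym2 d (\<lambda>s r. F (c#s) r + ksgn (d c * wdeg d s) * F s (c#r))"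
  unfolding graded_sym2_def
proof (intro conjI allI)
  assume a: "(\<forall>s. graded_sym d (F s)) \<and> (\<forall>r. graded_sym d (\<lambda>s. F s r))"
  fix s
  have 1: "graded_sym d (\<lambda>r. F (c#s) r)" using a by blast
  have 0: "graded_sym d (F s)" using a by blast
  have 2: "graded_sym d (\<lambda>r. F s ([c] @ r))" by (rule graded_sym_prefix[OF 0])
  have 3: "graded_sym d (\<lambda>r. F (c#s) r + ksgn (d c * wdeg d s) * F s ([c] @ r))"
    by (rule graded_sym_add[OF 1 graded_sym_scale[OF 2]])
  then show "graded_sym d (\<lambda>r. F (c#s) r + ksgn (d c * wdeg d s) * F s (c#r))" by (simp only: append_Cons append_Nil)
next
  assume a: "(\<forall>s. graded_sym d (F s)) \<and> (\<forall>r. graded_sym d (\<lambda>s. F s r))"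
  fix r
  have 0: "graded_sym d (\<lambda>s. F s r)" "graded_sym d (\<lambda>s. F s (c#r))" using a by blast+
  have 1: "graded_sym d (\<lambda>s. F ([c] @ s) r)" by (rule graded_sym_prefix[OF 0(1)])
  have 2: "graded_sym d (\<lambda>s. ksgn (d c * wdeg d s) * F s (c#r))"
    by (rule graded_sym_wdeg[OF 0(2), where g="\<lambda>t. ksgn (d c * t)"])
  have 3: "graded_sym d (\<lambda>s. F ([c] @ s) r + ksgn (d c * wdeg d s) * F s (c#r))" by (rule graded_sym_add[OF 1 2])
  then show "graded_sym d (\<lambda>s. F (c#s) r + ksgn (d c * wdeg d s) * F s (c#r))" by (simp only: append_Cons append_Nil)
qed

lemma unsh_sum_swap_base:
  assumes "graded_sym2 d F"
  shows "unsh_sum d F (a#b#v) = kpair d a b * unsh_sum d F (b#a#v)"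
proof -
  have s1: "F (a#b#s) r = kpair d a b * F (b#a#s) r" for s r
    using assms unfolding graded_sym2_def using graded_symD[of d "\<lambda>s. F s r" "[]" a b s] by simp
  have s2: "F s (a#b#r) = kpair d a b * F s (b#a#r)" for s r
    using assms unfolding graded_sym2_def using graded_symD[of d "F s" "[]" a b r] by simp
  have h1: "(ksgn (d a * (d b + wdeg d s)) :: 'a) = kpair d a b * ksgn (d a * wdeg d s)" for s
    by (simp add: kpair_def ksgn_add[symmetric] distrib_left)
  have h2: "(ksgn (d b * (d a + wdeg d s)) :: 'a) = kpair d a b * ksgn (d b * wdeg d s)" for s
    by (simp add: kpair_def ksgn_add[symmetric] distrib_left mult.commute)
  have ring: "K*x1 + K*A*x2 + B*(x3 + A*(K*x4)) = K*(x1 + K*B*x3 + A*(x2 + B*x4))"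
    if "K*K = 1" for K A B x1 x2 x3 x4 :: 'a
  proof -
    have "K*(x1 + K*B*x3 + A*(x2 + B*x4)) = K*x1 + (K*K)*(B*x3) + K*A*x2 + K*A*B*x4"
      by (simp add: algebra_simps)
    then show ?thesis using that by (simp add: algebra_simps)
  qed
  have "unsh_sum d F (a#b#v) = unsh_sum d (\<lambda>s r. kpair d a b * (F (b#a#s) r + ksgn (d b * (d a + wdeg d s)) * F (a#s) (b#r)
      + ksgn (d a * wdeg d s) * (F (b#s) (a#r) + ksgn (d b * wdeg d s) * F s (b#a#r)))) v"
  proof (simp only: unsh_sum.simps, rule unsh_sum_cong)
    fix s r
    show "F (a # b # s) r + ksgn (d a * wdeg d (b # s)) * F (b # s) (a # r) +
         ksgn (d b * wdeg d s) * (F (a # s) (b # r) + ksgn (d a * wdeg d s) * F s (a # b # r)) =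
         kpair d a b * (F (b#a#s) r + ksgn (d b * (d a + wdeg d s)) * F (a#s) (b#r)
      + ksgn (d a * wdeg d s) * (F (b#s) (a#r) + ksgn (d b * wdeg d s) * F s (b#a#r)))"
      unfolding s1 s2 wdeg_Cons h1 h2
      by (rule ring[OF kpair_sq])
  qed
  also have "\<dots> = kpair d a b * unsh_sum d F (b#a#v)"
    by (simp only: unsh_sum_scale unsh_sum.simps wdeg_Cons)
  finally show ?thesis .
qed

lemma graded_sym_unsh_sum: "graded_sym2 d F \<Longrightarrow> graded_sym d (unsh_sum d F)"
proof -
  assume a: "graded_sym2 d F"
  have "unsh_sum d F (u@a#b#v) = kpair d a b * unsh_sum d F (u@b#a#v)" for u a b v
    using a
  proof (induction u arbitrary: F)
    case Nil then show ?case unfolding append_Nil by (rule unsh_sum_swap_base)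
  next
    case (Cons c u)
    show ?case unfolding append_Cons unsh_sum.simps by (rule Cons.IH[OF graded_sym2_step[OF Cons.prems]])
  qed
  then show ?thesis by (rule graded_symI)
qed

lemma graded_sym_unsh_sum_param:
  "(\<And>s r. graded_sym d (\<lambda>u. F u s r)) \<Longrightarrow> graded_sym d (\<lambda>u. unsh_sum d (F u) w)"
proof (rule graded_symI)
  fix u a b v assume a: "\<And>s r. graded_sym d (\<lambda>u. F u s r)"
  have "unsh_sum d (F (u@a#b#v)) w = unsh_sum d (\<lambda>s r. kpair d a b * F (u@b#a#v) s r) w"
    by (rule unsh_sum_cong) (rule graded_symD[OF a])
  then show "unsh_sum d (F (u@a#b#v)) w = kpair d a b * unsh_sum d (F (u@b#a#v)) w" by (simp add: unsh_sum_scale)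
qed

section \<open>Coderivations\<close>

lemma coder_unsh_sum: "coder n d q w m = unsh_sum d (\<lambda>s r. if s = [] then 0 else vprod n d (q s) r m) w"
proof -
  have "coder n d q w m = unsh_sum d (\<lambda>s r. if s \<noteq> [] then vprod n d (q s) r m else 0) w"
    unfolding coder_def by (rule sum_subsets_unsh_sum) (auto simp: nths_eq_Nil_iff)
  also have "\<dots> = unsh_sum d (\<lambda>s r. if s = [] then 0 else vprod n d (q s) r m) w"
    by (rule arg_cong[where f="\<lambda>F. unsh_sum d F w"], intro ext) simp
  finally show ?thesis .
qed

lemma graded_sym_vprod: "graded_sym d (\<lambda>r. vprod n d v r m)"
  unfolding vprod_def
proof (rule graded_sym_sum)
  fix j show "graded_sym d (\<lambda>r. v j * mono d (j#r) m)" by (rule graded_sym_scale[OF graded_sym_mono_Cons])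
qed simp

lemma graded_sym2_coder:
  assumes "\<And>j. graded_sym d (\<lambda>s. q s j)"
  shows "graded_sym2 d (\<lambda>s r. if s = [] then 0 else vprod n d (q s) r m)"
  unfolding graded_sym2_def
proof (intro conjI allI)
  fix s
  show "graded_sym d (\<lambda>r. if s = [] then 0 else vprod n d (q s) r m)"
  proof (cases "s = []")
    case True then show ?thesis by (simp add: graded_sym_def)
  next
    case False then show ?thesis using graded_sym_vprod[of d n "q s" m] by simp
  qed
next
  fix r
  have "graded_sym d (\<lambda>s. vprod n d (q s) r m)"
    unfolding vprod_def
  proof (rule graded_sym_sum)
    fix j
    have "graded_sym d (\<lambda>s. mono d (j#r) m * q s j)" by (rule graded_sym_scale[OF assms])
    then show "graded_sym d (\<lambda>s. q s j * mono d (j#r) m)" by (simp only: mult.commute)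
  qed simp
  then show "graded_sym d (\<lambda>s. if s = [] then 0 else vprod n d (q s) r m)"
    by (rule graded_sym_if_Nil)
qed

lemma graded_sym_coder:
  assumes "\<And>j. graded_sym d (\<lambda>s. q s j)"
  shows "graded_sym d (\<lambda>w. coder n d q w m)"
  unfolding coder_unsh_sum by (rule graded_sym_unsh_sum[OF graded_sym2_coder[OF assms]])

lemma vprod_lin: "vprod n d (\<lambda>i. v1 i + c * v2 i) r m = vprod n d v1 r m + c * vprod n d v2 r m"
  unfolding vprod_def by (simp add: sum.distrib sum_distrib_left distrib_right mult.assoc)

lemma coder_lin: "coder n d (\<lambda>s i. q1 s i + c * q2 s i) w m = coder n d q1 w m + c * coder n d q2 w m"
proof -
  have "coder n d (\<lambda>s i. q1 s i + c * q2 s i) w m =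
    unsh_sum d (\<lambda>s r. (if s = [] then 0 else vprod n d (q1 s) r m) + c * (if s = [] then 0 else vprod n d (q2 s) r m)) w"
    unfolding coder_unsh_sum by (rule unsh_sum_cong) (simp add: vprod_lin)
  then show ?thesis unfolding coder_unsh_sum by (simp add: unsh_sum_add unsh_sum_scale)
qed

lemma coder_zero: "coder n d (\<lambda>e i. 0) y m = 0"
  by (simp add: coder_def vprod_def)

lemma coder_scale: "coder n d (\<lambda>e i. c * q e i) y m = c * coder n d q y m"
  using coder_lin[of n d "\<lambda>e i. 0" c q y m] by (simp add: coder_zero)

lemma coder_sum: "finite A \<Longrightarrow> coder n d (\<lambda>e i. \<Sum>j\<in>A. Q j e i) y m = (\<Sum>j\<in>A. coder n d (Q j) y m)"
proof (induction A rule: finite_induct)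
  case empty then show ?case by (simp add: coder_zero)
next
  case (insert a A)
  then show ?case using coder_lin[of n d "Q a" 1 "\<lambda>e i. \<Sum>j\<in>A. Q j e i" y m] by simp
qed

lemma coder_cong:
  assumes "\<And>s j. s \<noteq> [] \<Longrightarrow> set s \<subseteq> set w \<Longrightarrow> j < n \<Longrightarrow> q1 s j = q2 s j"
  shows "coder n d q1 w m = coder n d q2 w m"
  unfolding coder_unsh_sum
proof (rule unsh_sum_cong)
  fix s r assume "set s \<subseteq> set w"
  then show "(if s = [] then 0 else vprod n d (q1 s) r m) = (if s = [] then 0 else vprod n d (q2 s) r m)"
    using assms unfolding vprod_def by (auto intro!: sum.cong)
qed

lemma coder_unsh_sum_param:
  "coder n d (\<lambda>e i. unsh_sum d (\<lambda>s r. F s r e i) x) y m = unsh_sum d (\<lambda>s r. coder n d (F s r) y m) x"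
proof (induction x arbitrary: F)
  case Nil then show ?case by simp
next
  case (Cons c x)
  have "coder n d (\<lambda>e i. unsh_sum d (\<lambda>s r. F s r e i) (c#x)) y m =
     coder n d (\<lambda>e i. unsh_sum d (\<lambda>s r. F (c#s) r e i + ksgn (d c * wdeg d s) * F s (c#r) e i) x) y m" by (simp only: unsh_sum.simps)
  also have "\<dots> = unsh_sum d (\<lambda>s r. coder n d (\<lambda>e i. F (c#s) r e i + ksgn (d c * wdeg d s) * F s (c#r) e i) y m) x"
    by (rule Cons.IH)
  also have "\<dots> = unsh_sum d (\<lambda>s r. coder n d (F (c#s) r) y m + ksgn (d c * wdeg d s) * coder n d (F s (c#r)) y m) x"
    by (simp only: coder_lin)
  finally show ?case by (simp only: unsh_sum.simps)
qed

lemma coder_Cons: "coder n d p (j#r') m = unsh_sum d (\<lambda>s2 r2. vprod n d (p (j#s2)) r2 m +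
   ksgn (d j * wdeg d s2) * (if s2 = [] then 0 else vprod n d (p s2) (j#r2) m)) r'"
  unfolding coder_unsh_sum by simp

lemma mono_letter: "mono d [j] [k] = (if j = k then 1 else 0)"
  by (simp add: mono_def ksort_sign_sorted odd_rep_Cons)

lemma mono_Cons_letter: "r \<noteq> [] \<Longrightarrow> mono d (j#r) [k] = 0"
proof -
  assume r: "r \<noteq> []"
  have "length (sort (j#r)) \<noteq> length [k]" using r by (cases r) simp_all
  then have "[k] \<noteq> sort (j#r)" by metis
  then show ?thesis by (simp add: mono_def)
qed

lemma coder_corestriction:
  assumes "u \<noteq> []" "k < n"
  shows "coder n d q u [k] = q u k"
proof -
  have "coder n d q u [k] = unsh_sum d (\<lambda>s r. if r = [] then (if s = [] then 0 else q s k) else 0) u"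
    unfolding coder_unsh_sum
  proof (rule unsh_sum_cong)
    fix s r
    show "(if s = [] then 0 else vprod n d (q s) r [k]) = (if r = [] then (if s = [] then 0 else q s k) else 0)"
    proof (cases "r = []")
      case True
      have "vprod n d (q s) [] [k] = (\<Sum>j<n. q s j * (if j = k then 1 else 0))"
        unfolding vprod_def by (simp add: mono_letter)
      also have "\<dots> = (\<Sum>j<n. if j = k then q s j else 0)" by (rule sum.cong) auto
      also have "\<dots> = q s k" using assms(2) by (simp add: sum.delta)
      finally show ?thesis using True by simp
    next
      case False then show ?thesis by (simp add: vprod_def mono_Cons_letter)
    qed
  qed
  also have "\<dots> = (if u = [] then 0 else q u k)" by (rule unsh_sum_if_right_Nil)
  finally show ?thesis using assms by simp
qed

lemma mono_nonzero_sort: "mono d u m \<noteq> 0 \<Longrightarrow> m = sort u"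
  by (auto simp: mono_def split: if_splits)

lemma sum_mono_delta:
  fixes F :: "nat list \<Rightarrow> 'a::field_char_0"
  assumes "graded_sym d F" "finite T" "sort u \<in> T"
  shows "(\<Sum>m\<in>T. mono d u m * F m) = F u"
proof -
  have "(\<Sum>m\<in>T. mono d u m * F m) = (\<Sum>m\<in>T. if m = sort u then mono d u (sort u) * F (sort u) else 0)"
    by (rule sum.cong[OF refl]) (auto dest: mono_nonzero_sort)
  also have "\<dots> = mono d u (sort u) * F (sort u)" using assms(2,3) by simp
  also have "\<dots> = (if odd_rep d u then 0 else ksort_sign d u * F (sort u))" by (simp add: mono_def)
  also have "\<dots> = F u" using graded_sym_sort_eq[OF assms(1)] by simp
  finally show ?thesis .
qed

lemma lin_sum_mono:
  fixes F :: "nat list \<Rightarrow> 'a::field_char_0"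
  assumes F: "graded_sym d F" and A: "finite A"
  shows "(\<Sum>m\<in>{m. (\<Sum>i\<in>A. c i * mono d (u i) m) \<noteq> 0}. (\<Sum>i\<in>A. c i * mono d (u i) m) * F m) = (\<Sum>i\<in>A. c i * F (u i))"
proof -
  let ?X = "\<lambda>m. \<Sum>i\<in>A. c i * mono d (u i) m"
  let ?T = "(\<lambda>i. sort (u i)) ` A"
  have fT: "finite ?T" using A by simp
  have sub: "{m. ?X m \<noteq> 0} \<subseteq> ?T"
  proof
    fix m assume "m \<in> {m. ?X m \<noteq> 0}"
    then obtain i where "i \<in> A" "c i * mono d (u i) m \<noteq> 0" by (auto elim: sum.not_neutral_contains_not_neutral)
    then show "m \<in> ?T" using mono_nonzero_sort[of d "u i" m] by auto
  qed
  have "(\<Sum>m\<in>{m. ?X m \<noteq> 0}. ?X m * F m) = (\<Sum>m\<in>?T. ?X m * F m)"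
    by (rule sum.mono_neutral_left[OF fT sub]) auto
  also have "\<dots> = (\<Sum>m\<in>?T. \<Sum>i\<in>A. c i * (mono d (u i) m * F m))"
    by (simp add: sum_distrib_right mult.assoc)
  also have "\<dots> = (\<Sum>i\<in>A. c i * (\<Sum>m\<in>?T. mono d (u i) m * F m))"
    by (subst sum.swap) (simp add: sum_distrib_left)
  also have "\<dots> = (\<Sum>i\<in>A. c i * F (u i))"
    by (rule sum.cong[OF refl]) (simp add: sum_mono_delta[OF F fT])
  finally show ?thesis .
qed

lemma sum_cartesian_curried: "(\<Sum>x\<in>A\<times>B. f (fst x) (snd x)) = (\<Sum>a\<in>A. \<Sum>b\<in>B. f a b)"
  by (simp add: sum.cartesian_product split_def)

lemma coder_mono_expansion:
  "coder n d r w m = (\<Sum>x\<in>masks (length w) \<times> {..<n}.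
      (mask_sign d (fst x) w * (if mask_sel (fst x) w = [] then 0 else r (mask_sel (fst x) w) (snd x))) * mono d (snd x # mask_rej (fst x) w) m)"
proof -
  have "coder n d r w m = (\<Sum>ms\<in>masks (length w). mask_sign d ms w *
     (if mask_sel ms w = [] then 0 else vprod n d (r (mask_sel ms w)) (mask_rej ms w) m))"
    unfolding coder_unsh_sum unsh_sum_masks ..
  also have "\<dots> = (\<Sum>ms\<in>masks (length w). \<Sum>j<n.
      (mask_sign d ms w * (if mask_sel ms w = [] then 0 else r (mask_sel ms w) j)) * mono d (j # mask_rej ms w) m)"
    by (rule sum.cong[OF refl]) (simp add: vprod_def sum_distrib_left mult.assoc)
  also have "\<dots> = (\<Sum>x\<in>masks (length w) \<times> {..<n}.
      (mask_sign d (fst x) w * (if mask_sel (fst x) w = [] then 0 else r (mask_sel (fst x) w) (snd x))) * mono d (snd x # mask_rej (fst x) w) m)"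
    by (rule sum_cartesian_curried[symmetric])
  finally show ?thesis .
qed

lemma lin_coder_graded_sym:
  fixes G :: "nat list \<Rightarrow> 'a::field_char_0"
  assumes G: "graded_sym d G"
  shows "(\<Sum>m\<in>{m. coder n d r w m \<noteq> 0}. coder n d r w m * G m) =
     unsh_sum d (\<lambda>s r'. if s = [] then 0 else \<Sum>j<n. r s j * G (j#r')) w"
proof -
  let ?c = "\<lambda>x. mask_sign d (fst x) w * (if mask_sel (fst x) w = [] then 0 else r (mask_sel (fst x) w) (snd x))"
  let ?u = "\<lambda>x. snd x # mask_rej (fst x) w"
  have e: "\<And>m. coder n d r w m = (\<Sum>x\<in>masks (length w) \<times> {..<n}. ?c x * mono d (?u x) m)"
    by (rule coder_mono_expansion)
  have "(\<Sum>m\<in>{m. coder n d r w m \<noteq> 0}. coder n d r w m * G m) = (\<Sum>x\<in>masks (length w) \<times> {..<n}. ?c x * G (?u x))"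
    unfolding e by (rule lin_sum_mono[OF G]) simp
  also have "\<dots> = (\<Sum>ms\<in>masks (length w). mask_sign d ms w *
     (if mask_sel ms w = [] then 0 else \<Sum>j<n. r (mask_sel ms w) j * G (j # mask_rej ms w)))"
    unfolding sum_cartesian_curried[where f="\<lambda>ms j. mask_sign d ms w * (if mask_sel ms w = [] then 0 else r (mask_sel ms w) j) * G (j # mask_rej ms w)"]
    by (rule sum.cong[OF refl]) (simp add: sum_distrib_left mult.assoc)
  also have "\<dots> = unsh_sum d (\<lambda>s r'. if s = [] then 0 else \<Sum>j<n. r s j * G (j#r')) w"
    by (rule unsh_sum_masks[symmetric])
  finally show ?thesis .
qed

lemma comp_coder:
  fixes p :: "nat list \<Rightarrow> nat \<Rightarrow> 'a::field_char_0"
  assumes "\<And>j. graded_sym d (\<lambda>s. p s j)"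
  shows "comp (coder n d p) (coder n d r) w m' =
    unsh_sum d (\<lambda>s r'. if s = [] then 0 else \<Sum>j<n. r s j * coder n d p (j#r') m') w"
  unfolding comp_def lin_def by (rule lin_coder_graded_sym[OF graded_sym_coder[OF assms]])

section \<open>Commutators of coderivations\<close>

text \<open>The generator p(R(_)) of P \<circ> R, for the coderivations P, R generated by p, r.\<close>

definition prelie :: "nat \<Rightarrow> (nat \<Rightarrow> int) \<Rightarrow> (nat list \<Rightarrow> nat \<Rightarrow> 'a::comm_ring_1) \<Rightarrow> (nat list \<Rightarrow> nat \<Rightarrow> 'a) \<Rightarrow> nat list \<Rightarrow> nat \<Rightarrow> 'a" where
  "prelie n d p r s i = unsh_sum d (\<lambda>a b. if a = [] then 0 else \<Sum>j<n. r a j * p (j#b) i) s"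

lemma comp_coder_unsh_sum3:
  fixes p :: "nat list \<Rightarrow> nat \<Rightarrow> 'a::field_char_0"
  assumes "\<And>j. graded_sym d (\<lambda>s. p s j)"
  shows "comp (coder n d p) (coder n d r) w m =
    unsh_sum3 d (\<lambda>a b e. if a = [] then 0 else \<Sum>j<n. r a j * vprod n d (p (j#b)) e m) w +
    unsh_sum3 d (\<lambda>a b e. if a = [] then 0 else \<Sum>j<n. r a j * (ksgn (d j * wdeg d b) * (if b = [] then 0 else vprod n d (p b) (j#e) m))) w"
proof -
  have "comp (coder n d p) (coder n d r) w m =
    unsh_sum d (\<lambda>s r'. if s = [] then 0 else \<Sum>j<n. r s j * coder n d p (j#r') m) w"
    by (rule comp_coder[OF assms])
  also have "\<dots> = unsh_sum d (\<lambda>s r'. unsh_sum d (\<lambda>s2 r2. if s = [] then 0 else \<Sum>j<n. r s j * (vprod n d (p (j#s2)) r2 m +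
   ksgn (d j * wdeg d s2) * (if s2 = [] then 0 else vprod n d (p s2) (j#r2) m))) r') w"
  proof (rule unsh_sum_cong)
    fix s r'
    show "(if s = [] then 0 else \<Sum>j<n. r s j * coder n d p (j#r') m) =
      unsh_sum d (\<lambda>s2 r2. if s = [] then 0 else \<Sum>j<n. r s j * (vprod n d (p (j#s2)) r2 m +
      ksgn (d j * wdeg d s2) * (if s2 = [] then 0 else vprod n d (p s2) (j#r2) m))) r'"
      by (cases "s = []") (simp_all add: unsh_sum_zero coder_Cons unsh_sum_sum unsh_sum_scale)
  qed
  also have "\<dots> = unsh_sum3 d (\<lambda>a b e. if a = [] then 0 else \<Sum>j<n. r a j * (vprod n d (p (j#b)) e m +
   ksgn (d j * wdeg d b) * (if b = [] then 0 else vprod n d (p b) (j#e) m))) w"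
    by (rule unsh_sum_split_right)
  also have "\<dots> = unsh_sum3 d (\<lambda>a b e. (if a = [] then 0 else \<Sum>j<n. r a j * vprod n d (p (j#b)) e m) +
    (if a = [] then 0 else \<Sum>j<n. r a j * (ksgn (d j * wdeg d b) * (if b = [] then 0 else vprod n d (p b) (j#e) m)))) w"
    by (rule unsh_sum3_cong) (simp add: distrib_left sum.distrib)
  finally show ?thesis by (simp only: unsh_sum3_add)
qed

lemma unsh_sum3_prelie:
  "unsh_sum3 d (\<lambda>a b e. if a = [] then 0 else \<Sum>j<n. r a j * vprod n d (p (j#b)) e m) w = coder n d (prelie n d p r) w m"
proof -
  have "unsh_sum3 d (\<lambda>a b e. if a = [] then 0 else \<Sum>j<n. r a j * vprod n d (p (j#b)) e m) w =
    unsh_sum d (\<lambda>s r'. unsh_sum d (\<lambda>a b. if a = [] then 0 else \<Sum>j<n. r a j * vprod n d (p (j#b)) r' m) s) w"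
    by (rule unsh_sum_split_left[symmetric])
  also have "\<dots> = unsh_sum d (\<lambda>s r'. if s = [] then 0 else vprod n d (prelie n d p r s) r' m) w"
  proof (rule unsh_sum_cong)
    fix s r'
    show "unsh_sum d (\<lambda>a b. if a = [] then 0 else \<Sum>j<n. r a j * vprod n d (p (j#b)) r' m) s =
      (if s = [] then 0 else vprod n d (prelie n d p r s) r' m)"
    proof (cases "s = []")
      case True then show ?thesis by simp
    next
      case False
      have "vprod n d (prelie n d p r s) r' m = (\<Sum>i<n. unsh_sum d (\<lambda>a b. (if a = [] then 0 else \<Sum>j<n. r a j * p (j#b) i) * mono d (i#r') m) s)"
        unfolding vprod_def prelie_def by (simp add: unsh_sum_scale[symmetric] mult.commute)
      also have "\<dots> = unsh_sum d (\<lambda>a b. \<Sum>i<n. (if a = [] then 0 else \<Sum>j<n. r a j * p (j#b) i) * mono d (i#r') m) s"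
        by (rule unsh_sum_sum[symmetric]) simp
      also have "\<dots> = unsh_sum d (\<lambda>a b. if a = [] then 0 else \<Sum>j<n. r a j * vprod n d (p (j#b)) r' m) s"
        by (rule unsh_sum_cong) (auto simp: vprod_def sum_distrib_left sum_distrib_right mult.assoc intro: sum.swap)
      finally show ?thesis using False by simp
    qed
  qed
  also have "\<dots> = coder n d (prelie n d p r) w m" by (rule coder_unsh_sum[symmetric])
  finally show ?thesis .
qed

text \<open>The remaining part of P \<circ> R, where p and r act on disjoint parts of the word;
  it is graded symmetric in (p, r) and so cancels in the graded commutator.\<close>

definition cross_term :: "nat \<Rightarrow> (nat \<Rightarrow> int) \<Rightarrow> (nat list \<Rightarrow> nat \<Rightarrow> 'a::comm_ring_1) \<Rightarrow> (nat list \<Rightarrow> nat \<Rightarrow> 'a) \<Rightarrow> int \<Rightarrow> nat list \<Rightarrow> nat list \<Rightarrow> nat list \<Rightarrow> nat list \<Rightarrow> 'a" where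
  "cross_term n d p r sr m a b e = (if a = [] \<or> b = [] then 0 else
     ksgn ((wdeg d a + sr) * wdeg d b) * (\<Sum>j<n. \<Sum>i<n. r a j * p b i * mono d (i#j#e) m))"

lemma unsh_sum3_cross:
  assumes degr: "\<And>s j. s \<noteq> [] \<Longrightarrow> set s \<subseteq> {..<n} \<Longrightarrow> r s j \<noteq> 0 \<Longrightarrow> d j = wdeg d s + sr"
    and w: "set w \<subseteq> {..<n}"
  shows "unsh_sum3 d (\<lambda>a b e. if a = [] then 0 else \<Sum>j<n. r a j * (ksgn (d j * wdeg d b) * (if b = [] then 0 else vprod n d (p b) (j#e) m))) w
    = unsh_sum3 d (cross_term n d p r sr m) w"
proof (rule unsh_sum3_cong)
  fix a b e assume a: "set a \<subseteq> set w"
  show "(if a = [] then 0 else \<Sum>j<n. r a j * (ksgn (d j * wdeg d b) * (if b = [] then 0 else vprod n d (p b) (j#e) m))) =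
    cross_term n d p r sr m a b e"
  proof (cases "a = [] \<or> b = []")
    case True then show ?thesis by (auto simp: cross_term_def)
  next
    case False
    have "(\<Sum>j<n. r a j * (ksgn (d j * wdeg d b) * vprod n d (p b) (j#e) m)) =
      (\<Sum>j<n. ksgn ((wdeg d a + sr) * wdeg d b) * (r a j * vprod n d (p b) (j#e) m))"
    proof (rule sum.cong[OF refl])
      fix j
      show "r a j * (ksgn (d j * wdeg d b) * vprod n d (p b) (j#e) m) = ksgn ((wdeg d a + sr) * wdeg d b) * (r a j * vprod n d (p b) (j#e) m)"
      proof (cases "r a j = 0")
        case True then show ?thesis by simp
      next
        case False
        then have "d j = wdeg d a + sr" using degr[of a j] \<open>\<not> (a = [] \<or> b = [])\<close> a w by auto
        then show ?thesis by (simp add: mult.left_commute)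
      qed
    qed
    then show ?thesis using False
      by (simp add: cross_term_def vprod_def sum_distrib_left mult.assoc)
  qed
qed

lemma cross_term_swap:
  fixes p r :: "nat list \<Rightarrow> nat \<Rightarrow> 'a::comm_ring_1"
  assumes degr: "\<And>s j. s \<noteq> [] \<Longrightarrow> set s \<subseteq> {..<n} \<Longrightarrow> r s j \<noteq> 0 \<Longrightarrow> d j = wdeg d s + sr"
    and degp: "\<And>s j. s \<noteq> [] \<Longrightarrow> set s \<subseteq> {..<n} \<Longrightarrow> p s j \<noteq> 0 \<Longrightarrow> d j = wdeg d s + sp"
    and a: "set a \<subseteq> {..<n}" and b: "set b \<subseteq> {..<n}"
  shows "ksgn (wdeg d a * wdeg d b) * cross_term n d r p sp m b a e = ksgn (sp * sr) * cross_term n d p r sr m a b e"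
proof (cases "a = [] \<or> b = []")
  case True then show ?thesis by (auto simp: cross_term_def)
next
  case False
  have "ksgn (wdeg d a * wdeg d b) * cross_term n d r p sp m b a e =
     (\<Sum>j<n. \<Sum>i<n. (ksgn (wdeg d a * wdeg d b) * ksgn ((wdeg d b + sp) * wdeg d a)) * (p b j * r a i * mono d (i#j#e) m))"
    using False by (simp add: cross_term_def sum_distrib_left mult.assoc)
  also have "\<dots> = (\<Sum>i<n. \<Sum>j<n. (ksgn (sp * sr) * ksgn ((wdeg d a + sr) * wdeg d b)) * (r a i * p b j * mono d (j#i#e) m))"
  proof (subst sum.swap, intro sum.cong[OF refl])
    fix i j
    show "ksgn (wdeg d a * wdeg d b) * ksgn ((wdeg d b + sp) * wdeg d a) * (p b j * r a i * mono d (i # j # e) m) =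
      ksgn (sp * sr) * ksgn ((wdeg d a + sr) * wdeg d b) * (r a i * p b j * mono d (j # i # e) m)"
    proof (cases "p b j = 0 \<or> r a i = 0")
      case True then show ?thesis by auto
    next
      case nz: False
      have dj: "d j = wdeg d b + sp" using degp[of b j] nz False b by auto
      have di: "d i = wdeg d a + sr" using degr[of a i] nz False a by auto
      have mo: "mono d (j#i#e) m = kpair d j i * mono d (i#j#e) m"
        using graded_symD[OF graded_sym_mono[where d=d and m=m], where u="[]" and a=j and b=i and v=e] by simp
      have sg: "(ksgn (wdeg d a * wdeg d b) * ksgn ((wdeg d b + sp) * wdeg d a) :: 'a) =
         ksgn (sp * sr) * ksgn ((wdeg d a + sr) * wdeg d b) * kpair d j i"
        unfolding kpair_def dj di ksgn_add[symmetric]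
        by (rule ksgn_eqI) (simp add: algebra_simps even_add even_mult_iff)
      show ?thesis unfolding mo sg by (simp add: mult_ac)
    qed
  qed
  also have "\<dots> = ksgn (sp * sr) * cross_term n d p r sr m a b e"
    using False by (simp add: cross_term_def sum_distrib_left mult.assoc)
  finally show ?thesis .
qed

lemma unsh_sum3_cross_swap:
  fixes p r :: "nat list \<Rightarrow> nat \<Rightarrow> 'a::comm_ring_1"
  assumes degr: "\<And>s j. s \<noteq> [] \<Longrightarrow> set s \<subseteq> {..<n} \<Longrightarrow> r s j \<noteq> 0 \<Longrightarrow> d j = wdeg d s + sr"
    and degp: "\<And>s j. s \<noteq> [] \<Longrightarrow> set s \<subseteq> {..<n} \<Longrightarrow> p s j \<noteq> 0 \<Longrightarrow> d j = wdeg d s + sp"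
    and w: "set w \<subseteq> {..<n}"
  shows "unsh_sum3 d (cross_term n d r p sp m) w = ksgn (sp * sr) * unsh_sum3 d (cross_term n d p r sr m) w"
proof -
  have "unsh_sum3 d (cross_term n d r p sp m) w =
      unsh_sum3 d (\<lambda>a b e. ksgn (wdeg d a * wdeg d b) * cross_term n d r p sp m b a e) w"
    by (rule unsh_sum3_swap12)
  also have "\<dots> = unsh_sum3 d (\<lambda>a b e. ksgn (sp * sr) * cross_term n d p r sr m a b e) w"
    by (rule unsh_sum3_cong, rule cross_term_swap[OF degr degp]) (use w in auto)
  also have "\<dots> = ksgn (sp * sr) * unsh_sum3 d (cross_term n d p r sr m) w"
    by (rule unsh_sum3_scale)
  finally show ?thesis .
qed

lemma comp_coder_prelie_cross:
  fixes p r :: "nat list \<Rightarrow> nat \<Rightarrow> 'a::field_char_0"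
  assumes "\<And>j. graded_sym d (\<lambda>s. p s j)"
    and "\<And>s j. s \<noteq> [] \<Longrightarrow> set s \<subseteq> {..<n} \<Longrightarrow> r s j \<noteq> 0 \<Longrightarrow> d j = wdeg d s + sr"
    and "set w \<subseteq> {..<n}"
  shows "comp (coder n d p) (coder n d r) w m =
    coder n d (prelie n d p r) w m + unsh_sum3 d (cross_term n d p r sr m) w"
  using comp_coder_unsh_sum3[OF assms(1), where r=r and w=w and m=m and n=n]
    unsh_sum3_prelie[where p=p and r=r and w=w and m=m] unsh_sum3_cross[OF assms(2,3), where p=p and m=m]
  by simp

definition prelie_bracket :: "nat \<Rightarrow> (nat \<Rightarrow> int) \<Rightarrow> (nat list \<Rightarrow> nat \<Rightarrow> 'a::comm_ring_1) \<Rightarrow> int \<Rightarrow>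
    (nat list \<Rightarrow> nat \<Rightarrow> 'a) \<Rightarrow> int \<Rightarrow> nat list \<Rightarrow> nat \<Rightarrow> 'a" where
  "prelie_bracket n d p sp r sr = (\<lambda>s i. prelie n d p r s i - ksgn (sp * sr) * prelie n d r p s i)"

lemma coder_diff: "coder n d (\<lambda>s i. q1 s i - c * q2 s i) w m = coder n d q1 w m - c * coder n d q2 w m"
  using coder_lin[of n d q1 "- c" q2 w m] by simp

lemma coder_commutator:
  fixes p r :: "nat list \<Rightarrow> nat \<Rightarrow> 'a::field_char_0"
  assumes symp: "\<And>j. graded_sym d (\<lambda>s. p s j)" and symr: "\<And>j. graded_sym d (\<lambda>s. r s j)"
    and degr: "\<And>s j. s \<noteq> [] \<Longrightarrow> set s \<subseteq> {..<n} \<Longrightarrow> r s j \<noteq> 0 \<Longrightarrow> d j = wdeg d s + sr"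
    and degp: "\<And>s j. s \<noteq> [] \<Longrightarrow> set s \<subseteq> {..<n} \<Longrightarrow> p s j \<noteq> 0 \<Longrightarrow> d j = wdeg d s + sp"
    and w: "set w \<subseteq> {..<n}"
  shows "comp (coder n d p) (coder n d r) w m - ksgn (sp * sr) * comp (coder n d r) (coder n d p) w m =
     coder n d (prelie_bracket n d p sp r sr) w m"
proof -
  have swap: "unsh_sum3 d (cross_term n d r p sp m) w = ksgn (sp * sr) * unsh_sum3 d (cross_term n d p r sr m) w"
    by (rule unsh_sum3_cross_swap[OF degr degp w])
  have kk: "ksgn (sp * sr) * (ksgn (sp * sr) * X) = (X::'a)" for X
    by (simp add: mult.assoc[symmetric] ksgn_sq)
  have c1: "comp (coder n d p) (coder n d r) w m = coder n d (prelie n d p r) w m + unsh_sum3 d (cross_term n d p r sr m) w"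
    by (rule comp_coder_prelie_cross[OF symp degr w])
  have c2: "comp (coder n d r) (coder n d p) w m = coder n d (prelie n d r p) w m + unsh_sum3 d (cross_term n d r p sp m) w"
    by (rule comp_coder_prelie_cross[OF symr degp w])
  show ?thesis
    unfolding c1 c2 swap prelie_bracket_def coder_diff
    by (simp add: distrib_left kk)
qed

section \<open>The adjoint coderivations\<close>

lemma valid_sort:
  "s \<noteq> [] \<Longrightarrow> set s \<subseteq> {..<n} \<Longrightarrow> \<not> odd_rep d s \<Longrightarrow> valid n d (sort s)"
  unfolding valid_def by (metis length_0_conv length_sort set_sort sorted_sort odd_rep_sort)

lemma wext_degree:
  assumes "lie_infty n d l" and "s \<noteq> []" "set s \<subseteq> {..<n}" and "wext d l s j \<noteq> 0"
  shows "d j = wdeg d s + 1"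
proof -
  have "\<not> odd_rep d s" and lz: "l (sort s) j \<noteq> 0" using assms(4) by (auto simp: wext_def split: if_splits)
  then have "valid n d (sort s)" using assms(2,3) by (rule_tac valid_sort) auto
  then show ?thesis using assms(1) lz unfolding lie_infty_def by auto
qed

definition nested_bracket :: "nat \<Rightarrow> (nat \<Rightarrow> int) \<Rightarrow> (nat list \<Rightarrow> nat \<Rightarrow> 'a::comm_ring_1) \<Rightarrow> nat \<Rightarrow>
    nat list \<Rightarrow> nat list \<Rightarrow> 'a" where
  "nested_bracket n d l k S R = (if S = [] then 0 else \<Sum>j<n. wext d l S j * wext d l (j # R) k)"

lemma graded_sym2_nested_bracket: "graded_sym2 d (nested_bracket n d l k)"
  unfolding graded_sym2_def nested_bracket_def
proof (intro conjI allI)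
  fix S
  show "graded_sym d (\<lambda>R. if S = [] then 0 else \<Sum>j<n. wext d l S j * wext d l (j # R) k)"
  proof (cases "S = []")
    case True then show ?thesis by (simp add: graded_sym_def)
  next
    case False
    have "graded_sym d (\<lambda>R. \<Sum>j<n. wext d l S j * wext d l (j # R) k)"
      by (rule graded_sym_sum) (auto intro: graded_sym_scale graded_sym_wext_Cons)
    then show ?thesis using False by simp
  qed
next
  fix R
  have "graded_sym d (\<lambda>S. \<Sum>j<n. wext d l S j * wext d l (j # R) k)"
  proof (rule graded_sym_sum)
    fix j
    have "graded_sym d (\<lambda>S. wext d l (j # R) k * wext d l S j)" by (rule graded_sym_scale[OF graded_sym_wext])
    then show "graded_sym d (\<lambda>S. wext d l S j * wext d l (j # R) k)" by (simp only: mult.commute)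
  qed simp
  then show "graded_sym d (\<lambda>S. if S = [] then 0 else \<Sum>j<n. wext d l S j * wext d l (j # R) k)"
    by (rule graded_sym_if_Nil)
qed

text \<open>lie_infty asserts M_E^2 = 0 on canonical words only; graded symmetry extends it to all words.\<close>

lemma higher_jacobi:
  fixes l :: "nat list \<Rightarrow> nat \<Rightarrow> 'a::field_char_0"
  assumes li: "lie_infty n d l" and k: "k < n" and w: "set w \<subseteq> {..<n}"
  shows "unsh_sum d (nested_bracket n d l k) w = 0"
proof -
  have "unsh_sum d (nested_bracket n d l k) w = (\<lambda>_. 0) w"
  proof (rule graded_sym_eq_on_sorted[where P="\<lambda>w. set w \<subseteq> {..<n}"])
    show "graded_sym d (unsh_sum d (nested_bracket n d l k))"
      by (rule graded_sym_unsh_sum[OF graded_sym2_nested_bracket])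
    show "graded_sym d (\<lambda>_. 0::'a)" by (simp add: graded_sym_def)
    show "\<And>u a b v. set (u@a#b#v) \<subseteq> {..<n} \<Longrightarrow> set (u@b#a#v) \<subseteq> {..<n}" by auto
    show "set w \<subseteq> {..<n}" by fact
  next
    fix w assume sw: "sorted w" "\<not> odd_rep d w" "set w \<subseteq> {..<n}"
    show "unsh_sum d (nested_bracket n d l k) w = 0"
    proof (cases "w = []")
      case True then show ?thesis by (simp add: nested_bracket_def)
    next
      case False
      then have "valid n d w" using sw by (simp add: valid_def)
      then have "comp (MapM n d l) (MapM n d l) w [k] = 0" using li unfolding lie_infty_def by simp
      also have "comp (MapM n d l) (MapM n d l) w [k] =
          unsh_sum d (\<lambda>s r'. if s = [] then 0 else \<Sum>j<n. wext d l s j * coder n d (wext d l) (j#r') [k]) w"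
        unfolding MapM_def by (rule comp_coder[OF graded_sym_wext])
      also have "\<dots> = unsh_sum d (nested_bracket n d l k) w"
        by (rule unsh_sum_cong) (simp add: nested_bracket_def coder_corestriction[OF _ k])
      finally show ?thesis .
    qed
  qed
  then show ?thesis by simp
qed

definition ad_gen :: "(nat \<Rightarrow> int) \<Rightarrow> (nat list \<Rightarrow> nat \<Rightarrow> 'a::comm_ring_1) \<Rightarrow> nat list \<Rightarrow> nat list \<Rightarrow> nat \<Rightarrow> 'a" where
  "ad_gen d l s = (\<lambda>e. wext d l (s @ e))"

lemma ad_gen_Nil: "ad_gen d l [] = wext d l"
  by (simp add: ad_gen_def)

lemma adD_ad_gen: "adD n d l s = coder n d (ad_gen d l s)"
  unfolding adD_def ad_gen_def ..

lemma MapM_eq_coder: "MapM n d l = coder n d (wext d l)"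
  unfolding MapM_def ..

lemma graded_sym_ad_gen: "graded_sym d (\<lambda>e. ad_gen d l s e j)"
  unfolding ad_gen_def by (rule graded_sym_prefix[OF graded_sym_wext])

lemma ad_gen_degree:
  assumes "lie_infty n d l" and "set x \<subseteq> {..<n}"
    and "s \<noteq> []" "set s \<subseteq> {..<n}" "ad_gen d l x s j \<noteq> 0"
  shows "d j = wdeg d s + (wdeg d x + 1)"
  using wext_degree[OF assms(1), of "x @ s" j] assms(2-5) by (auto simp: ad_gen_def)

lemma graded_sym_adD: "graded_sym d (\<lambda>u. adD n d l u y m)"
  unfolding adD_ad_gen coder_unsh_sum
proof (rule graded_sym_unsh_sum_param)
  fix s r
  show "graded_sym d (\<lambda>u. if s = [] then 0 else vprod n d (ad_gen d l u s) r m)"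
  proof (cases "s = []")
    case True then show ?thesis by (simp add: graded_sym_def)
  next
    case False
    have "graded_sym d (\<lambda>u. vprod n d (ad_gen d l u s) r m)"
      unfolding vprod_def ad_gen_def
    proof (rule graded_sym_sum)
      fix j
      have "graded_sym d (\<lambda>u. mono d (j#r) m * wext d l (u @ s) j)"
        by (rule graded_sym_scale[OF graded_sym_suffix[OF graded_sym_wext]])
      then show "graded_sym d (\<lambda>u. wext d l (u @ s) j * mono d (j # r) m)" by (simp only: mult.commute)
    qed simp
    then show ?thesis using False by simp
  qed
qed

lemma sum_wext_move:
  fixes l :: "nat list \<Rightarrow> nat \<Rightarrow> 'a::field_char_0"
  assumes li: "lie_infty n d l" and S: "S \<noteq> []" "set S \<subseteq> {..<n}"
  shows "(\<Sum>j<n. wext d l S j * wext d l (r @ j # b) k) =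
    ksgn ((wdeg d S + 1) * wdeg d r) * nested_bracket n d l k S (r @ b)"
proof -
  have "(\<Sum>j<n. wext d l S j * wext d l (r @ j # b) k) =
      (\<Sum>j<n. ksgn ((wdeg d S + 1) * wdeg d r) * (wext d l S j * wext d l (j # r @ b) k))"
  proof (rule sum.cong[OF refl])
    fix j
    show "wext d l S j * wext d l (r @ j # b) k =
        ksgn ((wdeg d S + 1) * wdeg d r) * (wext d l S j * wext d l (j # r @ b) k)"
    proof (cases "wext d l S j = 0")
      case False
      then have "d j = wdeg d S + 1" by (rule wext_degree[OF li S])
      moreover have "wext d l (r @ j # b) k = ksgn (d j * wdeg d r) * wext d l (j # r @ b) k"
        by (rule graded_sym_move_front[OF graded_sym_wext])
      ultimately show ?thesis by (simp add: mult_ac)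
    qed simp
  qed
  then show ?thesis using S by (simp add: nested_bracket_def sum_distrib_left)
qed

text \<open>The terms of the higher Jacobi identity on x \<odot> e whose inner bracket takes the part
  s of x and a nonempty part a of e.\<close>

definition jacobi_mixed :: "nat \<Rightarrow> (nat \<Rightarrow> int) \<Rightarrow> (nat list \<Rightarrow> nat \<Rightarrow> 'a::comm_ring_1) \<Rightarrow> nat \<Rightarrow>
    nat list \<Rightarrow> nat list \<Rightarrow> nat list \<Rightarrow> 'a" where
  "jacobi_mixed n d l k e s r = unsh_sum d (\<lambda>a b. if a = [] then 0 else
     ksgn (wdeg d r * wdeg d a) * nested_bracket n d l k (s @ a) (r @ b)) e"

lemma higher_jacobi_append:
  fixes l :: "nat list \<Rightarrow> nat \<Rightarrow> 'a::field_char_0"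
  assumes "lie_infty n d l" "k < n" "set x \<subseteq> {..<n}" "set e \<subseteq> {..<n}"
  shows "unsh_sum d (\<lambda>s r. nested_bracket n d l k s (r @ e)) x = - unsh_sum d (jacobi_mixed n d l k e) x"
proof -
  have "unsh_sum d (nested_bracket n d l k) (x @ e) =
      unsh_sum d (\<lambda>s r. nested_bracket n d l k s (r @ e) + jacobi_mixed n d l k e s r) x"
    unfolding unsh_sum_append
  proof (rule unsh_sum_cong)
    fix s r
    show "unsh_sum d (\<lambda>a b. ksgn (wdeg d r * wdeg d a) * nested_bracket n d l k (s @ a) (r @ b)) e =
        nested_bracket n d l k s (r @ e) + jacobi_mixed n d l k e s r"
      unfolding jacobi_mixed_def by (subst unsh_sum_split_left_Nil) simp
  qed
  moreover have "unsh_sum d (nested_bracket n d l k) (x @ e) = 0"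
    by (rule higher_jacobi) (use assms in auto)
  ultimately show ?thesis by (simp add: unsh_sum_add eq_neg_iff_add_eq_0)
qed

lemma prelie_ad_gen:
  fixes l :: "nat list \<Rightarrow> nat \<Rightarrow> 'a::field_char_0"
  assumes li: "lie_infty n d l" and s: "set s \<subseteq> {..<n}" and e: "set e \<subseteq> {..<n}"
  shows "prelie n d (ad_gen d l r) (ad_gen d l s) e k =
    ksgn ((wdeg d s + 1) * wdeg d r) * jacobi_mixed n d l k e s r"
proof -
  have "prelie n d (ad_gen d l r) (ad_gen d l s) e k = unsh_sum d (\<lambda>a b. ksgn ((wdeg d s + 1) * wdeg d r) *
      (if a = [] then 0 else ksgn (wdeg d r * wdeg d a) * nested_bracket n d l k (s @ a) (r @ b))) e"
    unfolding prelie_def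
  proof (rule unsh_sum_cong)
    fix a b assume a: "set a \<subseteq> set e"
    show "(if a = [] then 0 else \<Sum>j<n. ad_gen d l s a j * ad_gen d l r (j # b) k) =
      ksgn ((wdeg d s + 1) * wdeg d r) *
      (if a = [] then 0 else ksgn (wdeg d r * wdeg d a) * nested_bracket n d l k (s @ a) (r @ b))"
    proof (cases "a = []")
      case False
      have sa: "s @ a \<noteq> []" "set (s @ a) \<subseteq> {..<n}" using False a s e by auto
      have sg: "(ksgn ((wdeg d s + wdeg d a + 1) * wdeg d r) :: 'a) =
          ksgn ((wdeg d s + 1) * wdeg d r) * ksgn (wdeg d r * wdeg d a)"
        unfolding ksgn_add[symmetric] by (rule ksgn_eqI) (simp add: algebra_simps)
      have "(\<Sum>j<n. ad_gen d l s a j * ad_gen d l r (j # b) k) =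
          ksgn ((wdeg d s + wdeg d a + 1) * wdeg d r) * nested_bracket n d l k (s @ a) (r @ b)"
        unfolding ad_gen_def using sum_wext_move[OF li sa, of r b k] by (simp add: add.assoc)
      then show ?thesis using False by (simp only: sg mult.assoc if_False)
    qed simp
  qed
  then show ?thesis unfolding jacobi_mixed_def by (simp only: unsh_sum_scale)
qed

lemma unsh_sum_prelie_ad_gen:
  fixes l :: "nat list \<Rightarrow> nat \<Rightarrow> 'a::field_char_0"
  assumes li: "lie_infty n d l" and x: "set x \<subseteq> {..<n}" and e: "set e \<subseteq> {..<n}"
  shows "unsh_sum d (\<lambda>s r. if s \<noteq> [] \<and> r \<noteq> [] then
      ksgn (wdeg d s + 1) * prelie n d (ad_gen d l s) (ad_gen d l r) e k else 0) x =
    - unsh_sum d (\<lambda>s r. if s \<noteq> [] \<and> r \<noteq> [] then jacobi_mixed n d l k e s r else 0) x"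
proof -
  have "unsh_sum d (\<lambda>s r. if s \<noteq> [] \<and> r \<noteq> [] then
      ksgn (wdeg d s + 1) * prelie n d (ad_gen d l s) (ad_gen d l r) e k else 0) x =
    unsh_sum d (\<lambda>s r. ksgn (wdeg d s * wdeg d r) * (if r \<noteq> [] \<and> s \<noteq> [] then
      ksgn (wdeg d r + 1) * prelie n d (ad_gen d l r) (ad_gen d l s) e k else 0)) x"
    by (rule unsh_sum_comm)
  also have "\<dots> = unsh_sum d (\<lambda>s r. - (if s \<noteq> [] \<and> r \<noteq> [] then jacobi_mixed n d l k e s r else 0)) x"
  proof (rule unsh_sum_cong)
    fix s r assume "set s \<subseteq> set x"
    then have P: "prelie n d (ad_gen d l r) (ad_gen d l s) e k =
        ksgn ((wdeg d s + 1) * wdeg d r) * jacobi_mixed n d l k e s r"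
      using x by (intro prelie_ad_gen[OF li _ e]) auto
    have "(ksgn (wdeg d s * wdeg d r) * (ksgn (wdeg d r + 1) * ksgn ((wdeg d s + 1) * wdeg d r)) :: 'a) = -1"
      by (simp add: ksgn_add[symmetric] ksgn_def even_add even_mult_iff algebra_simps)
    then show "ksgn (wdeg d s * wdeg d r) * (if r \<noteq> [] \<and> s \<noteq> [] then
        ksgn (wdeg d r + 1) * prelie n d (ad_gen d l r) (ad_gen d l s) e k else 0) =
      - (if s \<noteq> [] \<and> r \<noteq> [] then jacobi_mixed n d l k e s r else 0)"
      by (simp add: P mult.assoc[symmetric])
  qed
  finally show ?thesis by (simp only: unsh_sum_neg)
qed

lemma unsh_sum_prelie_ad_gen_swap:
  fixes l :: "nat list \<Rightarrow> nat \<Rightarrow> 'a::field_char_0"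
  assumes li: "lie_infty n d l" and x: "set x \<subseteq> {..<n}" and e: "set e \<subseteq> {..<n}"
  shows "unsh_sum d (\<lambda>s r. if s \<noteq> [] \<and> r \<noteq> [] then ksgn (wdeg d s + 1) *
      (ksgn ((wdeg d s + 1) * (wdeg d r + 1)) * prelie n d (ad_gen d l r) (ad_gen d l s) e k) else 0) x =
    unsh_sum d (\<lambda>s r. if s \<noteq> [] \<and> r \<noteq> [] then jacobi_mixed n d l k e s r else 0) x"
proof (rule unsh_sum_cong)
  fix s r assume "set s \<subseteq> set x"
  then have P: "prelie n d (ad_gen d l r) (ad_gen d l s) e k =
      ksgn ((wdeg d s + 1) * wdeg d r) * jacobi_mixed n d l k e s r"
    using x by (intro prelie_ad_gen[OF li _ e]) auto
  have "(ksgn (wdeg d s + 1) * (ksgn ((wdeg d s + 1) * (wdeg d r + 1)) * ksgn ((wdeg d s + 1) * wdeg d r)) :: 'a) = 1"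
    by (simp add: ksgn_add[symmetric] ksgn_def even_add even_mult_iff algebra_simps)
  then show "(if s \<noteq> [] \<and> r \<noteq> [] then ksgn (wdeg d s + 1) *
      (ksgn ((wdeg d s + 1) * (wdeg d r + 1)) * prelie n d (ad_gen d l r) (ad_gen d l s) e k) else 0) =
    (if s \<noteq> [] \<and> r \<noteq> [] then jacobi_mixed n d l k e s r else 0)"
    by (simp add: P mult.assoc[symmetric])
qed

definition ad_bracket_gen :: "nat \<Rightarrow> (nat \<Rightarrow> int) \<Rightarrow> (nat list \<Rightarrow> nat \<Rightarrow> 'a::comm_ring_1) \<Rightarrow> nat list \<Rightarrow>
    nat list \<Rightarrow> nat \<Rightarrow> 'a" where
  "ad_bracket_gen n d l x = (\<lambda>e i. unsh_sum d (\<lambda>s r. if s \<noteq> [] \<and> r \<noteq> [] then ksgn (wdeg d s + 1) *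
     prelie_bracket n d (ad_gen d l s) (wdeg d s + 1) (ad_gen d l r) (wdeg d r + 1) e i else 0) x)"

lemma ad_bracket_gen_jacobi_mixed:
  fixes l :: "nat list \<Rightarrow> nat \<Rightarrow> 'a::field_char_0"
  assumes li: "lie_infty n d l" and x: "set x \<subseteq> {..<n}" and e: "set e \<subseteq> {..<n}"
  shows "ad_bracket_gen n d l x e k =
    - 2 * unsh_sum d (\<lambda>s r. if s \<noteq> [] \<and> r \<noteq> [] then jacobi_mixed n d l k e s r else 0) x"
proof -
  have "ad_bracket_gen n d l x e k =
    unsh_sum d (\<lambda>s r. if s \<noteq> [] \<and> r \<noteq> [] then
      ksgn (wdeg d s + 1) * prelie n d (ad_gen d l s) (ad_gen d l r) e k else 0) x -
    unsh_sum d (\<lambda>s r. if s \<noteq> [] \<and> r \<noteq> [] then ksgn (wdeg d s + 1) *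
      (ksgn ((wdeg d s + 1) * (wdeg d r + 1)) * prelie n d (ad_gen d l r) (ad_gen d l s) e k) else 0) x"
    unfolding ad_bracket_gen_def prelie_bracket_def unsh_sum_diff[symmetric]
    by (rule unsh_sum_cong) (simp add: right_diff_distrib)
  then show ?thesis
    unfolding unsh_sum_prelie_ad_gen[OF li x e] unsh_sum_prelie_ad_gen_swap[OF li x e] by simp
qed

lemma higher_jacobi_split:
  fixes l :: "nat list \<Rightarrow> nat \<Rightarrow> 'a::field_char_0"
  assumes li: "lie_infty n d l" and x: "x \<noteq> []" "set x \<subseteq> {..<n}" and e: "set e \<subseteq> {..<n}" and k: "k < n"
  shows "unsh_sum d (\<lambda>s r. nested_bracket n d l k s (r @ e)) x =
    - prelie_bracket n d (wext d l) 1 (ad_gen d l x) (wdeg d x + 1) e k + 1/2 * ad_bracket_gen n d l x e k"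
proof -
  let ?J = "jacobi_mixed n d l k e"
  have "prelie n d (ad_gen d l []) (ad_gen d l x) e k = ksgn ((wdeg d x + 1) * wdeg d []) * ?J x []"
    by (rule prelie_ad_gen[OF li x(2) e])
  then have J1: "prelie n d (wext d l) (ad_gen d l x) e k = ?J x []"
    by (simp add: ad_gen_Nil)
  have "prelie n d (ad_gen d l x) (ad_gen d l []) e k = ksgn ((wdeg d [] + 1) * wdeg d x) * ?J [] x"
    by (rule prelie_ad_gen[OF li _ e]) simp
  then have J2: "prelie n d (ad_gen d l x) (wext d l) e k = ksgn (wdeg d x) * ?J [] x"
    by (simp add: ad_gen_Nil)
  have "(ksgn (1 * (wdeg d x + 1)) * ksgn (wdeg d x) :: 'a) = -1"
    unfolding ksgn_add[symmetric] by (simp add: ksgn_def)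
  then have outer: "prelie_bracket n d (wext d l) 1 (ad_gen d l x) (wdeg d x + 1) e k = ?J x [] + ?J [] x"
    unfolding prelie_bracket_def J1 J2 by (simp add: mult.assoc[symmetric])
  have split: "unsh_sum d ?J x = ?J [] x + ?J x [] +
      unsh_sum d (\<lambda>s r. if s \<noteq> [] \<and> r \<noteq> [] then ?J s r else 0) x"
    by (rule unsh_sum_split_Nil[OF x(1)])
  show ?thesis
    unfolding higher_jacobi_append[OF li k x(2) e] split outer ad_bracket_gen_jacobi_mixed[OF li x(2) e]
    by simp
qed

lemma adD_el_MapM:
  fixes l :: "nat list \<Rightarrow> nat \<Rightarrow> 'a::field_char_0"
  shows "adD_el n d l (MapM n d l x) y m = coder n d (\<lambda>e i. unsh_sum d (\<lambda>s r. nested_bracket n d l i s (r @ e)) x) y m"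
proof -
  have "adD_el n d l (MapM n d l x) y m =
      (\<Sum>u\<in>{u. coder n d (wext d l) x u \<noteq> 0}. coder n d (wext d l) x u * adD n d l u y m)"
    unfolding adD_el_def MapM_eq_coder ..
  also have "\<dots> = unsh_sum d (\<lambda>s r. if s = [] then 0 else \<Sum>j<n. wext d l s j * adD n d l (j#r) y m) x"
    by (rule lin_coder_graded_sym[OF graded_sym_adD])
  also have "\<dots> = unsh_sum d (\<lambda>s r. coder n d (\<lambda>e i. nested_bracket n d l i s (r @ e)) y m) x"
  proof (rule unsh_sum_cong)
    fix s r
    have "coder n d (\<lambda>e i. \<Sum>j<n. wext d l s j * wext d l (j # r @ e) i) y m =
        (\<Sum>j<n. wext d l s j * adD n d l (j#r) y m)"
      by (simp add: coder_sum coder_scale adD_def)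
    then show "(if s = [] then 0 else \<Sum>j<n. wext d l s j * adD n d l (j#r) y m) =
        coder n d (\<lambda>e i. nested_bracket n d l i s (r @ e)) y m"
      by (simp add: nested_bracket_def coder_zero)
  qed
  also have "\<dots> = coder n d (\<lambda>e i. unsh_sum d (\<lambda>s r. nested_bracket n d l i s (r @ e)) x) y m"
    by (rule coder_unsh_sum_param[symmetric])
  finally show ?thesis .
qed

lemma adD_el_MapM_split:
  fixes l :: "nat list \<Rightarrow> nat \<Rightarrow> 'a::field_char_0"
  assumes li: "lie_infty n d l" and x: "x \<noteq> []" "set x \<subseteq> {..<n}" and y: "set y \<subseteq> {..<n}"
  shows "adD_el n d l (MapM n d l x) y m =
    - coder n d (prelie_bracket n d (wext d l) 1 (ad_gen d l x) (wdeg d x + 1)) y m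
    + 1/2 * coder n d (ad_bracket_gen n d l x) y m"
proof -
  have "coder n d (\<lambda>e i. unsh_sum d (\<lambda>s r. nested_bracket n d l i s (r @ e)) x) y m =
      coder n d (\<lambda>e i. (-1) * prelie_bracket n d (wext d l) 1 (ad_gen d l x) (wdeg d x + 1) e i
        + 1/2 * ad_bracket_gen n d l x e i) y m"
  proof (rule coder_cong)
    fix e i assume "set e \<subseteq> set y" "i < n"
    then show "unsh_sum d (\<lambda>s r. nested_bracket n d l i s (r @ e)) x =
        (-1) * prelie_bracket n d (wext d l) 1 (ad_gen d l x) (wdeg d x + 1) e i + 1/2 * ad_bracket_gen n d l x e i"
      using higher_jacobi_split[OF li x, of e i] y by auto
  qed
  also have "\<dots> = (-1) * coder n d (prelie_bracket n d (wext d l) 1 (ad_gen d l x) (wdeg d x + 1)) y m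
      + 1/2 * coder n d (ad_bracket_gen n d l x) y m"
    by (simp only: coder_lin coder_scale)
  finally show ?thesis
    unfolding adD_el_MapM by simp
qed

lemma dM_adD:
  fixes l :: "nat list \<Rightarrow> nat \<Rightarrow> 'a::field_char_0"
  assumes li: "lie_infty n d l" and x: "set x \<subseteq> {..<n}" and y: "set y \<subseteq> {..<n}"
  shows "dM n d l (adD n d l x) (wdeg d x + 1) y m =
    - coder n d (prelie_bracket n d (wext d l) 1 (ad_gen d l x) (wdeg d x + 1)) y m"
proof -
  have "comp (coder n d (wext d l)) (coder n d (ad_gen d l x)) y m
      - ksgn (1 * (wdeg d x + 1)) * comp (coder n d (ad_gen d l x)) (coder n d (wext d l)) y m =
      coder n d (prelie_bracket n d (wext d l) 1 (ad_gen d l x) (wdeg d x + 1)) y m"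
    by (rule coder_commutator[OF graded_sym_wext graded_sym_ad_gen ad_gen_degree[OF li x] wext_degree[OF li] y])
  then show ?thesis
    unfolding dM_def MapM_eq_coder adD_ad_gen by (simp add: algebra_simps)
qed

lemma sum_cbr_adD:
  fixes l :: "nat list \<Rightarrow> nat \<Rightarrow> 'a::field_char_0"
  assumes li: "lie_infty n d l" and x: "set x \<subseteq> {..<n}" and y: "set y \<subseteq> {..<n}"
  shows "(\<Sum>I\<in>{I. I \<subseteq> {..<length x} \<and> I \<noteq> {} \<and> I \<noteq> {..<length x}}. unsh_sign d x I *
      cbr (adD n d l (nths x I)) (wdeg d (nths x I) + 1) (adD n d l (nths x (- I))) (wdeg d (nths x (- I)) + 1) y m) =
    coder n d (ad_bracket_gen n d l x) y m"
proof -
  have "(\<Sum>I\<in>{I. I \<subseteq> {..<length x} \<and> I \<noteq> {} \<and> I \<noteq> {..<length x}}. unsh_sign d x I *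
      cbr (adD n d l (nths x I)) (wdeg d (nths x I) + 1) (adD n d l (nths x (- I))) (wdeg d (nths x (- I)) + 1) y m) =
    unsh_sum d (\<lambda>s r. if s \<noteq> [] \<and> r \<noteq> [] then
      cbr (adD n d l s) (wdeg d s + 1) (adD n d l r) (wdeg d r + 1) y m else 0) x"
    by (rule sum_proper_subsets_unsh_sum)
  also have "\<dots> = unsh_sum d (\<lambda>s r. coder n d (\<lambda>e i. if s \<noteq> [] \<and> r \<noteq> [] then ksgn (wdeg d s + 1) *
      prelie_bracket n d (ad_gen d l s) (wdeg d s + 1) (ad_gen d l r) (wdeg d r + 1) e i else 0) y m) x"
  proof (rule unsh_sum_cong)
    fix s r assume "set s \<subseteq> set x" "set r \<subseteq> set x"
    then have sr: "set s \<subseteq> {..<n}" "set r \<subseteq> {..<n}" using x by auto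
    have "comp (coder n d (ad_gen d l s)) (coder n d (ad_gen d l r)) y m
        - ksgn ((wdeg d s + 1) * (wdeg d r + 1)) * comp (coder n d (ad_gen d l r)) (coder n d (ad_gen d l s)) y m =
        coder n d (prelie_bracket n d (ad_gen d l s) (wdeg d s + 1) (ad_gen d l r) (wdeg d r + 1)) y m"
      by (rule coder_commutator[OF graded_sym_ad_gen graded_sym_ad_gen
          ad_gen_degree[OF li sr(2)] ad_gen_degree[OF li sr(1)] y])
    then have "cbr (adD n d l s) (wdeg d s + 1) (adD n d l r) (wdeg d r + 1) y m = ksgn (wdeg d s + 1) *
        coder n d (prelie_bracket n d (ad_gen d l s) (wdeg d s + 1) (ad_gen d l r) (wdeg d r + 1)) y m"
      unfolding cbr_def adD_ad_gen by simp
    then show "(if s \<noteq> [] \<and> r \<noteq> [] then cbr (adD n d l s) (wdeg d s + 1) (adD n d l r) (wdeg d r + 1) y m else 0) =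
      coder n d (\<lambda>e i. if s \<noteq> [] \<and> r \<noteq> [] then ksgn (wdeg d s + 1) *
        prelie_bracket n d (ad_gen d l s) (wdeg d s + 1) (ad_gen d l r) (wdeg d r + 1) e i else 0) y m"
      by (simp add: coder_scale coder_zero)
  qed
  also have "\<dots> = coder n d (ad_bracket_gen n d l x) y m"
    unfolding ad_bracket_gen_def by (rule coder_unsh_sum_param[symmetric])
  finally show ?thesis .
qed

theorem mainTheorem2:
  fixes n :: nat and d :: "nat \<Rightarrow> int" and l :: "nat list \<Rightarrow> nat \<Rightarrow> 'a::real_normed_field"
  assumes "lie_infty n d l"
    and "valid n d x"
    and "valid n d y"
  shows "adD_el n d l (MapM n d l x) y =
     (\<lambda>m. dM n d l (adD n d l x) (wdeg d x + 1) y m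
        + 1/2 * (\<Sum>I\<in>{I. I \<subseteq> {..<length x} \<and> I \<noteq> {} \<and> I \<noteq> {..<length x}}.
             unsh_sign d x I *
             cbr (adD n d l (nths x I)) (wdeg d (nths x I) + 1)
                 (adD n d l (nths x (- I))) (wdeg d (nths x (- I)) + 1) y m))"
proof -
  have x: "x \<noteq> []" "set x \<subseteq> {..<n}" and y: "set y \<subseteq> {..<n}"
    using assms(2,3) by (auto simp: valid_def)
  show ?thesis
    by (rule ext) (simp only: adD_el_MapM_split[OF assms(1) x y] dM_adD[OF assms(1) x(2) y]
        sum_cbr_adD[OF assms(1) x(2) y])
qed

end
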